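(* Fix $n\ge 2$ and $q\in\{1,\dots,n\}$, and let $\{p_r\}$ be a sequence of integers with $0\le p_r\le r-n$ such that \[ \lim_{r\to\infty}\frac{2p_r-r}{\sqrt r}=a \] for some $a\in\mathbb{R}$. Then for almost every $x\in\Omega$, \[ \lim_{r\to\infty}\left(\frac{(q-1)!\,(n-q)!\,\sqrt{2\pi r}}{2^{\,r+2-3n}\,r^{n-1}}\right)\cdot k_{p_r,q}(x;r) = e^{-a^2/2}. \]
   Context: Fix an integer $n\ge 2$. For an integer $r\ge n$ write $[r]=\{1,\dots,r\}$ and $\binom{[r]}{n-1}$ for the set of $(n-1)$-element subsets of $[r]$; elements are written $I=\{i_1<\dots<i_{n-1}\}$. A Betti table is an array of real numbers $k_{p,q}$ with columns $p=0,\dots,r-n$ and rows $q=1,\dots,n$. For $I\in\binom{[r]}{n-1}$ write $[r]\setminus I=\{d_0<d_1<\dots<d_{r-n}\}$; the pure diagram $\pi(r,I)$ is the Betti table with $k_{p,q}(\pi(r,I))=0$ if $q\neq d_p-p$, and $k_{p,d_p-p}(\pi(r,I)) = (r-n)!\cdot\prod_{0\le \ell\le r-n,\ \ell\neq p}\frac{1}{|d_\ell-d_p|}$. Let $\binom{[\infty]}{n-1}$ be the set of all $(n-1)$-element subsets of $\mathbb{Z}_{>0}$, and let $\Omega=[0,1]^{\binom{[\infty]}{n-1}}$ carry the product probability measure of the uniform (Lebesgue) measures on the factors. For $x=(x_I)\in\Omega$ and $r\ge n$ set $k_{p,q}(x;r)=\sum_{I\in\binom{[r]}{n-1}} x_I\,k_{p,q}(\pi(r,I))$.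 *)

theory Defs
  imports "HOL-Probability.Probability"
begin

definition subsets_r :: "nat \<Rightarrow> nat \<Rightarrow> nat set set" where
  "subsets_r n r = {I. I \<subseteq> {1..r} \<and> card I = n - 1}"

definition subsets_inf :: "nat \<Rightarrow> nat set set" where
  "subsets_inf n = {I. finite I \<and> I \<subseteq> {0<..} \<and> card I = n - 1}"

text \<open>d_p: the p-th (0-based) element of [r] minus I in increasing order.\<close>
definition dseq :: "nat \<Rightarrow> nat set \<Rightarrow> nat \<Rightarrow> nat" where
  "dseq r I p = sorted_list_of_set ({1..r} - I) ! p"

definition pure_diagram :: "nat \<Rightarrow> nat \<Rightarrow> nat set \<Rightarrow> nat \<Rightarrow> nat \<Rightarrow> real" where
  "pure_diagram n r I p q =
     (if int q \<noteq> int (dseq r I p) - int p then 0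
      else fact (r - n) *
        (\<Prod>l\<in>{0..r-n} - {p}. 1 / \<bar>real (dseq r I l) - real (dseq r I p)\<bar>))"

definition kx :: "nat \<Rightarrow> (nat set \<Rightarrow> real) \<Rightarrow> nat \<Rightarrow> nat \<Rightarrow> nat \<Rightarrow> real" where
  "kx n x r p q = (\<Sum>I\<in>subsets_r n r. x I * pure_diagram n r I p q)"

definition Omega :: "nat \<Rightarrow> (nat set \<Rightarrow> real) measure" where
  "Omega n = (\<Pi>\<^sub>M I\<in>subsets_inf n. uniform_measure lborel {0..1::real})"

end

theory Submission
  imports Defs
begin

(* k_{p,q}(x;r) is a weighted sum \<Sum>_I x_I w_r(I) of independent uniform [0,1] variables, with
   weights w_r(I) = k_{p,q}(\<pi>(r,I)).  The proof has a deterministic and a probabilistic half.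

   Deterministic: an entry of \<pi>(r,I) in column p is nonzero only in row q with d_p = p+q, and then
   equals (r-n)! \<prod>_{i\<in>I} |i-(p+q)| / ((p+q-1)! (r-p-q)!).  Summing over I factorises the column
   sum into a binomial coefficient times two elementary symmetric functions e_k(1..N), whose growth
   N^(2k) / (2^k k!) we determine.  The binomial factor is handled by a local limit theorem
   (de Moivre-Laplace), proved from Wallis' product.  Hence the normalised column sum W_r tends to
   2 exp (-a^2/2) (column_sum_limit).

   Probabilistic: every single weight is at most W_r / (\<kappa> r), so Hoeffding's inequality and
   Borel-Cantelli give a strong law of large numbers, \<Sum>_I x_I w_r(I) / W_r \<rightarrow> 1/2 almost
   surely (weighted_slln).  The theorem is the product of the two limits. *)

(* The elementary symmetric function e_k(1,...,N) of the first N positive integers, defined by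
   the recursion e_{k+1}(1..N+1) = e_{k+1}(1..N) + (N+1) e_k(1..N). *)
fun esym :: "nat \<Rightarrow> nat \<Rightarrow> real" where
  "esym 0 N = 1"
| "esym (Suc k) 0 = 0"
| "esym (Suc k) (Suc N) = esym (Suc k) N + real (Suc N) * esym k N"

lemma power_diff_le:
  fixes X Y :: real assumes "0 \<le> Y" "Y \<le> X"
  shows "X^(Suc k) - Y^(Suc k) \<le> real (Suc k) * X^k * (X - Y)"
proof (induction k)
  case 0 then show ?case by simp
next
  case (Suc k)
  have "X^(Suc (Suc k)) - Y^(Suc (Suc k)) = X*(X^(Suc k) - Y^(Suc k)) + Y^(Suc k)*(X-Y)"
    by (simp add: algebra_simps)
  also have "\<dots> \<le> X*(real (Suc k) * X^k * (X - Y)) + X^(Suc k)*(X-Y)"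
    using Suc assms by (intro add_mono mult_left_mono mult_right_mono power_mono) auto
  also have "\<dots> = real (Suc (Suc k)) * X^(Suc k) * (X-Y)" by (simp add: algebra_simps)
  finally show ?case .
qed

lemma power_add_ge:
  fixes s t :: real assumes "0 \<le> s" "0 \<le> t"
  shows "s^(Suc k) + real (Suc k) * t * s^k \<le> (s+t)^(Suc k)"
proof (induction k)
  case 0 then show ?case by simp
next
  case (Suc k)
  have "s^(Suc (Suc k)) + real (Suc (Suc k)) * t * s^(Suc k)
      = s * (s^(Suc k) + real (Suc k) * t * s^k) + t * s^(Suc k)"
    by (simp add: algebra_simps)
  also have "\<dots> \<le> s * (s+t)^(Suc k) + t * (s+t)^(Suc k)"
    using Suc assms by (intro add_mono mult_left_mono power_mono) auto
  also have "\<dots> = (s+t)^(Suc (Suc k))" by (simp add: algebra_simps)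
  finally show ?case .
qed

lemma esym_upper: "esym k N \<le> (real N * (real N + 1) / 2)^k / fact k"
proof (induction k N rule: esym.induct)
  case (1 N) then show ?case by simp
next
  case (2 k) then show ?case by simp
next
  case (3 k N)
  define s where "s = real N * (real N + 1) / 2"
  have s0: "s \<ge> 0" by (simp add: s_def)
  have "esym (Suc k) (Suc N) = esym (Suc k) N + real (Suc N) * esym k N" by simp
  also have "\<dots> \<le> s^(Suc k)/fact (Suc k) + real (Suc N) * (s^k / fact k)"
    using 3 unfolding s_def by (intro add_mono mult_left_mono) auto
  also have "\<dots> = (s^(Suc k) + real (Suc k) * real (Suc N) * s^k) / fact (Suc k)"
    by (simp add: field_simps del: of_nat_Suc)
  also have "\<dots> \<le> (s + real (Suc N))^(Suc k) / fact (Suc k)"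
    by (intro divide_right_mono) (use power_add_ge[OF s0, of "real (Suc N)" k] in auto)
  also have "s + real (Suc N) = real (Suc N) * (real (Suc N) + 1) / 2"
    by (simp add: s_def field_simps)
  finally show ?case .
qed

(* The matching lower bound max(0, N-k)^(2k) / (2^k k!), which has the same leading term. *)
definition esym_lb :: "nat \<Rightarrow> nat \<Rightarrow> real" where
  "esym_lb k N = (max 0 (real N - real k))^(2*k) / (2^k * fact k)"

lemma esym_lb_step: "esym_lb (Suc k) (Suc N) \<le> esym_lb (Suc k) N + real (Suc N) * esym_lb k N"
proof (cases "k < N")
  case False
  then have "esym_lb (Suc k) (Suc N) = 0" by (simp add: esym_lb_def)
  moreover have "esym_lb j M \<ge> 0" for j M by (simp add: esym_lb_def)
  ultimately show ?thesis by (simp add: add_nonneg_nonneg)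
next
  case True
  define u where "u = real N - real k"
  have u1: "u \<ge> 1" using True unfolding u_def by linarith
  have lb_SS: "esym_lb (Suc k) (Suc N) = (u^2)^(Suc k) / (2^(Suc k) * fact (Suc k))"
    using u1 by (simp add: esym_lb_def u_def power_mult power2_eq_square)
  have "real N - real (Suc k) = u - 1" by (simp add: u_def)
  then have lb_S: "esym_lb (Suc k) N = ((u-1)^2)^(Suc k) / (2^(Suc k) * fact (Suc k))"
    using u1 unfolding esym_lb_def by (simp only: power_mult)
  have lb: "esym_lb k N = (u^2)^k / (2^k * fact k)"
    using u1 by (simp add: esym_lb_def u_def power_mult power2_eq_square)
  have "(u^2)^(Suc k) - ((u-1)^2)^(Suc k) \<le> real (Suc k) * (u^2)^k * (u^2 - (u-1)^2)"
    using u1 by (intro power_diff_le) (auto simp: power2_eq_square mult_mono)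
  also have "\<dots> \<le> real (Suc k) * (u^2)^k * (2 * real (Suc N))"
  proof (intro mult_left_mono)
    show "u^2 - (u-1)^2 \<le> 2 * real (Suc N)"
      using u1 by (simp add: power2_eq_square u_def algebra_simps)
  qed auto
  finally have "(u^2)^(Suc k) / (2^(Suc k) * fact (Suc k)) \<le>
      (((u-1)^2)^(Suc k) + real (Suc N) * (2 * real (Suc k) * (u^2)^k)) / (2^(Suc k) * fact (Suc k))"
    by (intro divide_right_mono) (auto simp: algebra_simps)
  also have "\<dots> = ((u-1)^2)^(Suc k) / (2^(Suc k) * fact (Suc k)) + real (Suc N) * ((u^2)^k / (2^k * fact k))"
    by (simp add: field_simps del: of_nat_Suc)
  finally show ?thesis using lb_SS lb_S lb by simp
qed

lemma esym_lower: "esym_lb k N \<le> esym k N"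
proof (induction k N rule: esym.induct)
  case (3 k N)
  have "esym_lb (Suc k) (Suc N) \<le> esym_lb (Suc k) N + real (Suc N) * esym_lb k N"
    by (rule esym_lb_step)
  also have "\<dots> \<le> esym (Suc k) N + real (Suc N) * esym k N"
    using 3 by (intro add_mono mult_left_mono) auto
  finally show ?case by simp
qed (simp_all add: esym_lb_def)

lemma esym_limit:
  "((\<lambda>N. esym k N * 2^k * fact k / real N ^ (2*k)) \<longlongrightarrow> 1) sequentially"
proof (rule real_tendsto_sandwich)
  show "eventually (\<lambda>N. (1 - real k / real N)^(2*k) \<le> esym k N * 2^k * fact k / real N ^ (2*k)) sequentially"
  proof (rule eventually_mono[OF eventually_ge_at_top[of "Suc k"]])
    fix N assume N: "Suc k \<le> N"
    have "1 - real k / real N = (real N - real k) / real N" using N by (simp add: field_simps)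
    then have "(1 - real k / real N)^(2*k) = (real N - real k)^(2*k) / real N^(2*k)"
      by (simp add: power_divide)
    also have "\<dots> = esym_lb k N * 2^k * fact k / real N ^ (2*k)"
      using N by (simp add: esym_lb_def)
    also have "\<dots> \<le> esym k N * 2^k * fact k / real N ^ (2*k)"
      using esym_lower[of k N] by (intro divide_right_mono mult_right_mono) auto
    finally show "(1 - real k / real N)^(2*k) \<le> esym k N * 2^k * fact k / real N ^ (2*k)" .
  qed
  show "eventually (\<lambda>N. esym k N * 2^k * fact k / real N ^ (2*k) \<le> (1 + 1 / real N)^k) sequentially"
  proof (rule eventually_mono[OF eventually_ge_at_top[of "Suc 0"]])
    fix N assume N: "Suc 0 \<le> N"
    have "esym k N * 2^k * fact k / real N ^ (2*k)
        \<le> (real N * (real N + 1) / 2)^k / fact k * 2^k * fact k / real N ^ (2*k)"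
      using esym_upper[of k N] by (intro divide_right_mono mult_right_mono) auto
    also have "\<dots> = ((real N * (real N + 1)) / (real N * real N))^k"
      by (simp add: power_divide power_mult_distrib power_mult power2_eq_square)
    also have "(real N * (real N + 1)) / (real N * real N) = 1 + 1 / real N"
      using N by (simp add: field_simps)
    finally show "esym k N * 2^k * fact k / real N ^ (2*k) \<le> (1 + 1 / real N)^k" .
  qed
  have "((\<lambda>N. (1 - real k / real N)^(2*k)) \<longlongrightarrow> (1 - 0)^(2*k)) sequentially"
    by (intro tendsto_intros tendsto_divide_0[OF tendsto_const] filterlim_real_sequentially)
  then show "((\<lambda>N. (1 - real k / real N)^(2*k)) \<longlongrightarrow> 1) sequentially" by simp
  have "((\<lambda>N. (1 + 1 / real N)^k) \<longlongrightarrow> (1 + 0)^k) sequentially"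
    by (intro tendsto_intros tendsto_divide_0[OF tendsto_const] filterlim_real_sequentially)
  then show "((\<lambda>N. (1 + 1 / real N)^k) \<longlongrightarrow> 1) sequentially" by simp
qed

lemma at_top_of_ratio:
  fixes f :: "nat \<Rightarrow> nat" and c :: real
  assumes lim: "((\<lambda>r. real (f r) / real r) \<longlongrightarrow> c) sequentially" and "c > 0"
  shows "filterlim f at_top sequentially"
  unfolding filterlim_at_top
proof
  fix Z :: nat
  have "filterlim (\<lambda>r. real (f r) / real r * real r) at_top sequentially"
    by (rule filterlim_tendsto_pos_mult_at_top[OF lim \<open>c > 0\<close> filterlim_real_sequentially])
  then have "eventually (\<lambda>r. real Z \<le> real (f r) / real r * real r) sequentially"
    by (simp add: filterlim_at_top)
  then show "eventually (\<lambda>r. Z \<le> f r) sequentially"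
    using eventually_gt_at_top[of 0] by eventually_elim simp
qed

lemma esym_scaled_limit:
  assumes lim: "((\<lambda>r. real (M r) / real r) \<longlongrightarrow> c) sequentially" and "c > 0"
  shows "((\<lambda>r. esym k (M r) * 2^k * fact k / real r ^ (2*k)) \<longlongrightarrow> c^(2*k)) sequentially"
proof -
  have "filterlim M at_top sequentially" by (rule at_top_of_ratio[OF lim \<open>c > 0\<close>])
  then have "((\<lambda>r. esym k (M r) * 2^k * fact k / real (M r) ^ (2*k) * (real (M r) / real r)^(2*k))
      \<longlongrightarrow> 1 * c^(2*k)) sequentially"
    by (intro tendsto_intros filterlim_compose[OF esym_limit] lim)
  moreover have "eventually (\<lambda>r. 1 \<le> M r) sequentially"
    using \<open>filterlim M at_top sequentially\<close> by (simp add: filterlim_at_top)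
  then have "eventually (\<lambda>r. esym k (M r) * 2^k * fact k / real (M r) ^ (2*k) * (real (M r) / real r)^(2*k)
      = esym k (M r) * 2^k * fact k / real r ^ (2*k)) sequentially"
    by eventually_elim (simp add: power_divide)
  ultimately show ?thesis by (simp add: tendsto_cong)
qed

lemma rank_nth:
  fixes C :: "'a::linorder set"
  assumes "finite C" "j < card C"
  shows "card {c\<in>C. c < sorted_list_of_set C ! j} = j"
proof -
  let ?L = "sorted_list_of_set C"
  have len: "length ?L = card C" by simp
  have st: "sorted_wrt (<) ?L" by (rule strict_sorted_list_of_set)
  have lt: "?L ! i < ?L ! k" if "i < k" "k < length ?L" for i k
    using st that by (auto simp: sorted_wrt_iff_nth_less)
  have setL: "set ?L = C" using assms by simp
  have "{c\<in>C. c < ?L ! j} = (\<lambda>i. ?L ! i) ` {..<j}"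
  proof
    show "{c\<in>C. c < ?L ! j} \<subseteq> (\<lambda>i. ?L ! i) ` {..<j}"
    proof
      fix c assume c: "c \<in> {c\<in>C. c < ?L ! j}"
      then obtain i where i: "i < length ?L" "c = ?L ! i"
        using setL by (metis (no_types, lifting) in_set_conv_nth mem_Collect_eq)
      have "i < j"
      proof (rule ccontr)
        assume "\<not> i < j"
        then have "j = i \<or> j < i" by auto
        then have "?L ! j \<le> ?L ! i" using lt[of j i] i by (auto simp: less_imp_le)
        then show False using c i by auto
      qed
      then show "c \<in> (\<lambda>i. ?L ! i) ` {..<j}" using i by auto
    qed
    show "(\<lambda>i. ?L ! i) ` {..<j} \<subseteq> {c\<in>C. c < ?L ! j}"
      using lt assms len setL by (auto intro: nth_mem simp del: set_sorted_list_of_set)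
  qed
  moreover have "inj_on (\<lambda>i. ?L ! i) {..<j}"
    using assms len by (intro inj_onI) (auto simp: nth_eq_iff_index_eq)
  ultimately show ?thesis by (simp add: card_image)
qed


lemma rank_unique:
  fixes C :: "'a::linorder set"
  assumes "finite C" "j < card C" "c \<in> C" "card {c'\<in>C. c' < c} = j"
  shows "c = sorted_list_of_set C ! j"
proof -
  obtain i where i: "i < card C" "c = sorted_list_of_set C ! i"
    using assms by (metis in_set_conv_nth length_sorted_list_of_set set_sorted_list_of_set)
  then have "i = j" using rank_nth[OF assms(1) i(1)] assms(4) by simp
  then show ?thesis using i by simp
qed


(* The entry d_p of the complement [r] - I equals p + q exactly when p + q \<notin> I and exactly q - 1
   elements of I lie below p + q: the p elements of the complement below d_p and the elements of I
   below d_p together fill up {1..<d_p}. *)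
lemma dseq_eq_iff:
  assumes I: "I \<subseteq> {1..r}" "card I = n - 1" and n: "1 \<le> n" "n \<le> r"
    and p: "p \<le> r - n" and q: "1 \<le> q" "p + q \<le> r"
  shows "dseq r I p = p + q \<longleftrightarrow> p + q \<notin> I \<and> card {i\<in>I. i < p + q} = q - 1"
proof -
  define C where "C = {1..r} - I"
  have finI: "finite I" using I finite_subset by blast
  have finC: "finite C" by (simp add: C_def)
  have "card C = r - n + 1"
    using I n unfolding C_def by (subst card_Diff_subset) (auto intro: finite_subset)
  then have pC: "p < card C" using p by simp
  define d where "d = sorted_list_of_set C ! p"
  have dC: "d \<in> C" unfolding d_def using finC pC
    by (metis length_sorted_list_of_set nth_mem set_sorted_list_of_set)
  have rank_d: "card {c\<in>C. c < d} = p" unfolding d_def by (rule rank_nth[OF finC pC])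
  have count: "card {c\<in>C. c < x} + card {i\<in>I. i < x} = x - 1" if "x \<in> {1..r}" for x
  proof -
    have "{c\<in>C. c < x} \<union> {i\<in>I. i < x} = {1..<x}" using I that by (auto simp: C_def)
    moreover have "card ({c\<in>C. c < x} \<union> {i\<in>I. i < x}) = card {c\<in>C. c < x} + card {i\<in>I. i < x}"
      by (intro card_Un_disjoint) (use finC finI in \<open>auto simp: C_def\<close>)
    ultimately show ?thesis by simp
  qed
  have m: "p + q \<in> {1..r}" using q by auto
  have "d = p + q \<longleftrightarrow> p + q \<notin> I \<and> card {i\<in>I. i < p + q} = q - 1"
  proof
    assume "d = p + q"
    then show "p + q \<notin> I \<and> card {i\<in>I. i < p + q} = q - 1"
      using dC count[OF m] rank_d by (auto simp: C_def)
  next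
    assume h: "p + q \<notin> I \<and> card {i\<in>I. i < p + q} = q - 1"
    then have "p + q \<in> C" using m by (simp add: C_def)
    moreover have "card {c\<in>C. c < p + q} = p" using count[OF m] h q by auto
    ultimately show "d = p + q" unfolding d_def by (intro rank_unique[OF finC pC, symmetric])
  qed
  then show ?thesis by (simp add: dseq_def d_def C_def)
qed

lemma prod_lower_fact: "(\<Prod>j\<in>{1..<m}. real (m - j)) = fact (m - 1)"
proof -
  have "(\<Prod>i\<in>{1..m-1}. real i) = (\<Prod>j\<in>{1..<m}. real (m - j))"
    by (rule prod.reindex_bij_witness[of _ "\<lambda>j. m - j" "\<lambda>i. m - i"]) auto
  then show ?thesis by (simp add: fact_prod)
qed

lemma prod_upper_fact: "(\<Prod>j\<in>{m<..r}. real (j - m)) = fact (r - m)"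
proof -
  have "(\<Prod>i\<in>{1..r-m}. real i) = (\<Prod>j\<in>{m<..r}. real (j - m))"
    by (rule prod.reindex_bij_witness[of _ "\<lambda>j. j - m" "\<lambda>i. i + m"]) auto
  then show ?thesis by (simp add: fact_prod)
qed

lemma prod_dist_to_point:
  assumes "m \<in> {1..r}"
  shows "(\<Prod>j\<in>{1..r}-{m}. \<bar>real j - real m\<bar>) = fact (m - 1) * fact (r - m)"
proof -
  have eq: "{1..r}-{m} = {1..<m} \<union> {m<..r}" using assms by auto
  have "(\<Prod>j\<in>{1..r}-{m}. \<bar>real j - real m\<bar>) =
        (\<Prod>j\<in>{1..<m}. \<bar>real j - real m\<bar>) * (\<Prod>j\<in>{m<..r}. \<bar>real j - real m\<bar>)"
    unfolding eq by (intro prod.union_disjoint) auto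
  also have "(\<Prod>j\<in>{1..<m}. \<bar>real j - real m\<bar>) = (\<Prod>j\<in>{1..<m}. real (m - j))"
    by (intro prod.cong) auto
  also have "(\<Prod>j\<in>{m<..r}. \<bar>real j - real m\<bar>) = (\<Prod>j\<in>{m<..r}. real (j - m))"
    by (intro prod.cong) auto
  finally show ?thesis unfolding prod_lower_fact prod_upper_fact .
qed


(* Closed form of a pure diagram entry: it vanishes unless the column-p entry lies in row q, i.e.
   d_p = p + q, and then equals (r-n)! \<prod>_{i\<in>I} |i - (p+q)| / ((p+q-1)! (r-p-q)!), since the
   distances from d_p to the complement of I are the distances to all of [r] with those to I removed. *)
lemma pure_diagram_closed:
  assumes I: "I \<in> subsets_r n r" and n: "n \<ge> 1" and r: "r \<ge> n"
    and p: "p \<le> r - n" and q: "q \<in> {1..n}"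
  shows "pure_diagram n r I p q =
     (if p + q \<notin> I \<and> card {i\<in>I. i < p + q} = q - 1
      then fact (r - n) * (\<Prod>i\<in>I. \<bar>real i - real (p+q)\<bar>) / (fact (p+q-1) * fact (r - (p+q)))
      else 0)"
proof -
  define m where "m = p + q"
  define C where "C = {1..r} - I"
  define L where "L = sorted_list_of_set C"
  have IS: "I \<subseteq> {1..r}" "card I = n - 1" using I by (auto simp: subsets_r_def)
  have finI: "finite I" using IS finite_subset by blast
  have mr: "m \<in> {1..r}" using q p r by (auto simp: m_def)
  have dseq_iff: "dseq r I p = m \<longleftrightarrow> m \<notin> I \<and> card {i\<in>I. i < m} = q - 1"
    unfolding m_def using IS n r p q by (intro dseq_eq_iff) auto
  have dseq_L: "dseq r I l = L ! l" for l by (simp add: dseq_def L_def C_def)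
  show ?thesis
  proof (cases "dseq r I p = m")
    case False
    then show ?thesis using dseq_iff unfolding m_def by (auto simp add: pure_diagram_def)
  next
    case True
    then have mI: "m \<notin> I" and dp: "L ! p = m" using dseq_iff dseq_L by auto
    have "card C = r - n + 1"
      using IS r n unfolding C_def by (subst card_Diff_subset) (auto intro: finite_subset)
    then have bij0: "bij_betw ((!) L) {0..r-n} C"
      by (intro bij_betw_nth) (auto simp: L_def C_def)
    moreover have "L ! p \<in> C" using bij_betw_apply[OF bij0] p by simp
    ultimately have bij: "bij_betw ((!) L) ({0..r-n} - {p}) (C - {m})"
      using p dp by (intro bij_betw_DiffI) (auto intro: bij_betw_subset)
    have "(\<Prod>l\<in>{0..r-n} - {p}. 1 / \<bar>real (dseq r I l) - real (dseq r I p)\<bar>)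
        = (\<Prod>c\<in>C - {m}. 1 / \<bar>real c - real m\<bar>)"
      unfolding dseq_L dp by (rule prod.reindex_bij_betw[OF bij])
    also have "\<dots> = 1 / (\<Prod>c\<in>C - {m}. \<bar>real c - real m\<bar>)"
      by (simp add: prod_dividef)
    also have "(\<Prod>c\<in>C - {m}. \<bar>real c - real m\<bar>) =
        fact (m - 1) * fact (r - m) / (\<Prod>i\<in>I. \<bar>real i - real m\<bar>)"
    proof -
      have "{1..r} - {m} = (C - {m}) \<union> I" using IS mI by (auto simp: C_def)
      then have "(\<Prod>j\<in>{1..r}-{m}. \<bar>real j - real m\<bar>) =
          (\<Prod>c\<in>C - {m}. \<bar>real c - real m\<bar>) * (\<Prod>i\<in>I. \<bar>real i - real m\<bar>)"
        using finI by (simp only:) (rule prod.union_disjoint, auto simp: C_def)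
      moreover have "(\<Prod>i\<in>I. \<bar>real i - real m\<bar>) \<noteq> 0"
        using mI finI by (auto simp: prod_zero_iff)
      ultimately show ?thesis using prod_dist_to_point[OF mr] by (simp add: field_simps)
    qed
    finally show ?thesis using dseq_iff True by (simp add: pure_diagram_def m_def)
  qed
qed

lemma k_subsets_insert:
  fixes f :: "'a \<Rightarrow> real"
  assumes "finite F" "x \<notin> F"
  shows "(\<Sum>A\<in>{A. A \<subseteq> insert x F \<and> card A = Suc j}. \<Prod>i\<in>A. f i) =
         (\<Sum>A\<in>{A. A \<subseteq> F \<and> card A = Suc j}. \<Prod>i\<in>A. f i) +
         f x * (\<Sum>B\<in>{B. B \<subseteq> F \<and> card B = j}. \<Prod>i\<in>B. f i)"
proof -
  have fin: "finite {A. A \<subseteq> F \<and> card A = k}" for k using assms(1) by auto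
  have sub_fin: "finite B" "x \<notin> B" if "B \<subseteq> F" for B
    using that assms finite_subset by auto
  have "{A. A \<subseteq> insert x F \<and> card A = Suc j}
      = {A. A \<subseteq> F \<and> card A = Suc j} \<union> insert x ` {B. B \<subseteq> F \<and> card B = j}"
    unfolding subset_insert_lemma using sub_fin by (auto simp: image_iff)
  moreover have "inj_on (insert x) {B. B \<subseteq> F \<and> card B = j}"
    using assms by (auto simp: inj_on_def)
  moreover have "{A. A \<subseteq> F \<and> card A = Suc j} \<inter> insert x ` {B. B \<subseteq> F \<and> card B = j} = {}"
    using assms by auto
  ultimately show ?thesis
    using fin sub_fin by (simp add: sum.union_disjoint sum.reindex sum_distrib_left)
qed

lemma esym_sum: "esym k N = (\<Sum>A\<in>{A. A \<subseteq> {1..N} \<and> card A = k}. \<Prod>i\<in>A. real i)"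
proof (induction N arbitrary: k)
  case 0
  have "{A. A \<subseteq> {1..0::nat} \<and> card A = k} = (if k = 0 then {{}} else {})" by auto
  then show ?case by (cases k) simp_all
next
  case (Suc N)
  have "A = {}" if "A \<subseteq> {1..Suc N}" "card A = 0" for A
    using that by (metis card_0_eq finite_atLeastAtMost finite_subset)
  then have empty: "{A. A \<subseteq> {1..Suc N} \<and> card A = 0} = {{}}" by auto
  have "{1..Suc N} = insert (Suc N) {1..N}" by auto
  then show ?case using Suc.IH empty by (cases k) (simp_all add: k_subsets_insert)
qed

lemma k_subsets_reindex:
  fixes f :: "'a \<Rightarrow> real" and g :: "'b \<Rightarrow> 'a"
  assumes bij: "bij_betw g X Y"
  shows "(\<Sum>A\<in>{A. A \<subseteq> Y \<and> card A = k}. \<Prod>i\<in>A. f i) =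
         (\<Sum>B\<in>{B. B \<subseteq> X \<and> card B = k}. \<Prod>j\<in>B. f (g j))"
proof -
  have inj: "inj_on g X" and im: "g ` X = Y" using bij by (auto simp: bij_betw_def)
  have injv: "inj_on (inv_into X g) Y" using inj im by (simp add: inj_on_inv_into)
  show ?thesis
  proof (rule sym, rule sum.reindex_bij_witness[where j="\<lambda>B. g ` B" and i="\<lambda>A. inv_into X g ` A"])
    fix A assume A: "A \<in> {A. A \<subseteq> Y \<and> card A = k}"
    then show "g ` inv_into X g ` A = A" using im by (auto simp: image_inv_into_cancel)
    have "inv_into X g ` A \<subseteq> X" using A im by (auto intro: inv_into_into)
    moreover have "card (inv_into X g ` A) = k"
      using A by (subst card_image) (auto intro: inj_on_subset[OF injv])
    ultimately show "inv_into X g ` A \<in> {B. B \<subseteq> X \<and> card B = k}" by simp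
  next
    fix B assume B: "B \<in> {B. B \<subseteq> X \<and> card B = k}"
    then show "inv_into X g ` g ` B = B" using inj by (auto simp: inv_into_image_cancel)
    have "g ` B \<subseteq> Y" using B im by auto
    moreover have "card (g ` B) = k"
      using B by (subst card_image) (auto intro: inj_on_subset[OF inj])
    ultimately show "g ` B \<in> {A. A \<subseteq> Y \<and> card A = k}" by simp
    show "(\<Prod>i\<in>g ` B. f i) = (\<Prod>j\<in>B. f (g j))"
      using B by (subst prod.reindex) (auto intro: inj_on_subset[OF inj])
  qed
qed

lemma esym_sum_below:
  "(\<Sum>A\<in>{A. A \<subseteq> {1..<m} \<and> card A = k}. \<Prod>i\<in>A. \<bar>real i - real m\<bar>) = esym k (m - 1)"
proof -
  have bij: "bij_betw (\<lambda>j. m - j) {1..m-1} {1..<m}"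
    by (rule bij_betw_byWitness[of _ "\<lambda>j. m - j"]) auto
  show ?thesis
    unfolding k_subsets_reindex[OF bij] esym_sum
    by (intro sum.cong refl prod.cong) (auto simp: subset_iff of_nat_diff)
qed

lemma esym_sum_above:
  "(\<Sum>B\<in>{B. B \<subseteq> {m<..r} \<and> card B = k}. \<Prod>i\<in>B. \<bar>real i - real m\<bar>) = esym k (r - m)"
proof -
  have bij: "bij_betw (\<lambda>j. j + m) {1..r-m} {m<..r}"
    by (rule bij_betw_byWitness[of _ "\<lambda>j. j - m"]) auto
  show ?thesis
    unfolding k_subsets_reindex[OF bij] esym_sum
    by (intro sum.cong refl prod.cong) auto
qed

(* A subset I of [r] avoiding m with j elements below m splits uniquely into its parts below and
   above m, so the sum of products over such I factorises. *)
lemma k_subsets_split: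
  fixes f :: "nat \<Rightarrow> real"
  assumes "m \<le> r"
  shows "(\<Sum>I\<in>{I. I \<subseteq> {1..r} \<and> m \<notin> I \<and> card {i\<in>I. i < m} = j \<and> card I = j + l}. \<Prod>i\<in>I. f i) =
         (\<Sum>A\<in>{A. A \<subseteq> {1..<m} \<and> card A = j}. \<Prod>i\<in>A. f i) *
         (\<Sum>B\<in>{B. B \<subseteq> {m<..r} \<and> card B = l}. \<Prod>i\<in>B. f i)"
proof -
  define T where "T = {I. I \<subseteq> {1..r} \<and> m \<notin> I \<and> card {i\<in>I. i < m} = j \<and> card I = j + l}"
  define SA where "SA = {A. A \<subseteq> {1..<m} \<and> card A = j}"
  define SB where "SB = {B. B \<subseteq> {m<..r} \<and> card B = l}"
  have below: "{i\<in>I. i < m} = I \<inter> {..<m}" for I :: "nat set" by auto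
  have split: "I = (I \<inter> {..<m}) \<union> (I \<inter> {m<..})" if "m \<notin> I" for I :: "nat set"
    using that by (auto simp: not_less_iff_gr_or_eq)
  have card_split: "card I = card (I \<inter> {..<m}) + card (I \<inter> {m<..})" if "m \<notin> I" "finite I" for I
    using that by (subst split[OF that(1)]) (auto intro!: card_Un_disjoint)
  have "(\<Sum>AB\<in>SA \<times> SB. \<Prod>i\<in>fst AB \<union> snd AB. f i) = (\<Sum>I\<in>T. \<Prod>i\<in>I. f i)"
  proof (rule sum.reindex_bij_witness[where j="\<lambda>AB. fst AB \<union> snd AB" and i="\<lambda>I. (I \<inter> {..<m}, I \<inter> {m<..})"])
    fix I assume I: "I \<in> T"
    then have "finite I" by (auto simp: T_def intro: finite_subset)
    then show "(I \<inter> {..<m}, I \<inter> {m<..}) \<in> SA \<times> SB"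
      using I card_split[of I] by (auto simp: T_def SA_def SB_def below)
    show "fst (I \<inter> {..<m}, I \<inter> {m<..}) \<union> snd (I \<inter> {..<m}, I \<inter> {m<..}) = I"
      using I split[of I] by (auto simp: T_def)
  next
    fix AB assume "AB \<in> SA \<times> SB"
    then obtain A B where AB: "AB = (A, B)" "A \<subseteq> {1..<m}" "card A = j" "B \<subseteq> {m<..r}" "card B = l"
      by (auto simp: SA_def SB_def)
    have fin: "finite A" "finite B" using AB finite_subset by auto
    have cut: "(A \<union> B) \<inter> {..<m} = A" "(A \<union> B) \<inter> {m<..} = B" using AB by auto
    then show "((fst AB \<union> snd AB) \<inter> {..<m}, (fst AB \<union> snd AB) \<inter> {m<..}) = AB"
      using AB by simp
    have "m \<notin> A \<union> B" using AB by auto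
    then show "fst AB \<union> snd AB \<in> T"
      using AB assms card_split[of "A \<union> B"] fin cut by (auto simp: T_def below)
  qed simp
  moreover have "(\<Prod>i\<in>fst AB \<union> snd AB. f i) = (\<Prod>i\<in>fst AB. f i) * (\<Prod>i\<in>snd AB. f i)"
    if "AB \<in> SA \<times> SB" for AB
  proof (rule prod.union_disjoint)
    show "finite (fst AB)" "finite (snd AB)" using that unfolding SA_def SB_def mem_Times_iff
      by (metis (no_types, lifting) finite_atLeastLessThan finite_subset mem_Collect_eq,
          metis (no_types, lifting) finite_greaterThanAtMost finite_subset mem_Collect_eq)
    show "fst AB \<inter> snd AB = {}" using that by (fastforce simp: SA_def SB_def)
  qed
  ultimately show ?thesis
    unfolding T_def[symmetric] SA_def[symmetric] SB_def[symmetric] sum_product sum.cartesian_product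
    by (simp add: case_prod_beta)
qed
(* The common factor (r-n)! / ((m-1)! (r-m)!) of the nonzero entries in position m = p + q. *)
definition Kcoef :: "nat \<Rightarrow> nat \<Rightarrow> nat \<Rightarrow> real" where
  "Kcoef n r m = fact (r - n) / (fact (m - 1) * fact (r - m))"

lemma Kcoef_pos: "Kcoef n r m > 0" by (simp add: Kcoef_def)

lemma pure_diagram_nonneg:
  assumes "I \<in> subsets_r n r" "n \<ge> 1" "r \<ge> n" "p \<le> r - n" "q \<in> {1..n}"
  shows "pure_diagram n r I p q \<ge> 0"
  using pure_diagram_closed[OF assms] by (simp add: prod_nonneg)

(* Each single entry is at most Kcoef \<cdot> r^(n-1): all n-1 distances |i - (p+q)| are below r. *)
lemma pure_diagram_le:
  assumes "I \<in> subsets_r n r" "n \<ge> 1" "r \<ge> n" "p \<le> r - n" "q \<in> {1..n}"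
  shows "pure_diagram n r I p q \<le> Kcoef n r (p+q) * real r ^ (n - 1)"
proof -
  have IS: "I \<subseteq> {1..r}" "card I = n - 1" using assms(1) by (auto simp: subsets_r_def)
  have "(\<Prod>i\<in>I. \<bar>real i - real (p+q)\<bar>) \<le> (\<Prod>i\<in>I. real r)"
    using IS assms by (intro prod_mono) (auto simp: subset_iff abs_le_iff)
  also have "\<dots> = real r ^ (n - 1)" using IS by simp
  finally have "Kcoef n r (p+q) * (\<Prod>i\<in>I. \<bar>real i - real (p+q)\<bar>) \<le> Kcoef n r (p+q) * real r ^ (n - 1)"
    using Kcoef_pos[of n r "p+q"] by (intro mult_left_mono) auto
  moreover have "0 \<le> Kcoef n r (p+q) * real r ^ (n - 1)"
    using Kcoef_pos[of n r "p+q"] by simp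
  ultimately show ?thesis using pure_diagram_closed[OF assms] by (auto simp: Kcoef_def)
qed

lemma sum_pure_diagram:
  assumes n: "n \<ge> 1" and r: "r \<ge> n" and p: "p \<le> r - n" and q: "q \<in> {1..n}"
  shows "(\<Sum>I\<in>subsets_r n r. pure_diagram n r I p q) =
         Kcoef n r (p+q) * esym (q - 1) (p + q - 1) * esym (n - q) (r - (p + q))"
proof -
  define m where "m = p + q"
  define T where "T = {I. I \<subseteq> {1..r} \<and> m \<notin> I \<and> card {i\<in>I. i < m} = q - 1 \<and> card I = (q - 1) + (n - q)}"
  have finS: "finite (subsets_r n r)" unfolding subsets_r_def
    by (rule finite_subset[of _ "Pow {1..r}"]) auto
  have T_eq: "T = {I\<in>subsets_r n r. m \<notin> I \<and> card {i\<in>I. i < m} = q - 1}"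
    using q by (auto simp: T_def subsets_r_def)
  have "(\<Sum>I\<in>subsets_r n r. pure_diagram n r I p q) = (\<Sum>I\<in>T. Kcoef n r m * (\<Prod>i\<in>I. \<bar>real i - real m\<bar>))"
  proof (rule sym, rule sum.mono_neutral_cong_left[OF finS])
    show "T \<subseteq> subsets_r n r" by (auto simp: T_eq)
    show "\<forall>I\<in>subsets_r n r - T. pure_diagram n r I p q = 0"
      using pure_diagram_closed[OF _ n r p q] by (auto simp: T_eq m_def)
    show "\<And>I. I \<in> T \<Longrightarrow> Kcoef n r m * (\<Prod>i\<in>I. \<bar>real i - real m\<bar>) = pure_diagram n r I p q"
      using pure_diagram_closed[OF _ n r p q] by (auto simp: T_eq m_def Kcoef_def)
  qed
  also have "\<dots> = Kcoef n r m * (esym (q - 1) (m - 1) * esym (n - q) (r - m))"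
  proof -
    have "m \<le> r" using p q r by (auto simp: m_def)
    then show ?thesis unfolding sum_distrib_left[symmetric] T_def
      by (simp only: k_subsets_split esym_sum_below esym_sum_above)
  qed
  finally show ?thesis by (simp add: m_def)
qed

lemma fact_split: "k \<le> m \<Longrightarrow> (fact m :: real) = fact (m - k) * (\<Prod>i<k. real (m - i))"
proof (induction k)
  case (Suc k)
  then have IH: "(fact m :: real) = fact (m - k) * (\<Prod>i<k. real (m - i))" by simp
  have "(fact (m - k) :: real) = real (m - k) * fact (m - k - 1)"
    using Suc.prems by (intro fact_reduce) simp
  then have "(fact (m - k) :: real) = real (m - k) * fact (m - Suc k)" by simp
  then show ?case unfolding IH prod.lessThan_Suc by (simp only: ac_simps)
qed simp

lemma Kcoef_binomial:
  assumes "n \<ge> 1" "r \<ge> n" "1 \<le> m" "m \<le> r"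
  shows "Kcoef n r m = real ((r-1) choose (m-1)) / (\<Prod>i<n-1. real (r - 1 - i))"
proof -
  have "real ((r-1) choose (m-1)) = fact (r-1) / (fact (m-1) * fact (r - 1 - (m - 1)))"
    using assms by (intro binomial_fact) auto
  moreover have "r - 1 - (m - 1) = r - m" using assms by auto
  ultimately have b: "real ((r-1) choose (m-1)) = fact (r-1) / (fact (m-1) * fact (r - m))" by simp
  have f: "(fact (r-1) :: real) = fact (r - n) * (\<Prod>i<n-1. real (r - 1 - i))"
    using assms fact_split[of "n-1" "r-1"] by simp
  define Q where "Q = (\<Prod>i<n-1. real (r - 1 - i))"
  have "Q > 0" unfolding Q_def using assms by (intro prod_pos) auto
  then show ?thesis unfolding Kcoef_def b f Q_def[symmetric] by (simp add: field_simps)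
qed

definition central_ratio :: "nat \<Rightarrow> real" where
  "central_ratio n = real ((2*n) choose n) / 4^n"

lemma central_ratio_pos: "central_ratio n > 0" by (simp add: central_ratio_def)

lemma choose_odd_central: "real ((2*n+1) choose (n+1)) = real ((2*n) choose n) * (2*real n+1)/(real n+1)"
proof -
  have h: "Suc n * (Suc (2*n) choose Suc n) = Suc (2*n) * ((2*n) choose n)"
    by (rule Suc_times_binomial)
  have "real (Suc n * (Suc (2*n) choose Suc n)) = real (Suc (2*n) * ((2*n) choose n))"
    by (simp only: h)
  then have "(real n + 1) * real ((2*n+1) choose (n+1)) = (2*real n+1) * real ((2*n) choose n)"
    by (simp only: of_nat_mult Suc_eq_plus1 of_nat_add of_nat_1 of_nat_numeral)
  then show ?thesis
    by (metis nonzero_mult_div_cancel_left mult.commute times_divide_eq_right of_nat_Suc Suc_eq_plus1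
        add.commute of_nat_0_less_iff zero_less_Suc less_irrefl)
qed

lemma choose_even_central: "real ((2*n+2) choose (n+1)) = real ((2*n) choose n) * 2*(2*real n+1)/(real n+1)"
proof -
  have h: "Suc n * (Suc (2*n+1) choose Suc n) = Suc (2*n+1) * ((2*n+1) choose n)"
    by (rule Suc_times_binomial)
  have sym: "(2*n+1) choose n = (2*n+1) choose (n+1)"
    using binomial_symmetric[of n "2*n+1"] by simp
  have e: "2*n+1+1 = 2*n+2" by simp
  have "real (Suc n * (Suc (2*n+1) choose Suc n)) = real (Suc (2*n+1) * ((2*n+1) choose (n+1)))"
    by (simp only: h sym)
  then have "(real n + 1) * real ((2*n+2) choose (n+1)) = (real n + 1) * (2 * real ((2*n+1) choose (n+1)))"
    by (simp only: of_nat_mult Suc_eq_plus1 e of_nat_add of_nat_1 of_nat_numeral) (simp add: algebra_simps)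
  then have "real ((2*n+2) choose (n+1)) = 2 * real ((2*n+1) choose (n+1))"
    by (metis mult_cancel_left of_nat_Suc Suc_eq_plus1 add.commute of_nat_0_less_iff zero_less_Suc less_irrefl)
  also have "\<dots> = 2 * (real ((2*n) choose n) * (2*real n+1)/(real n+1))"
    by (simp only: choose_odd_central)
  finally show ?thesis by (simp del: binomial_Suc_Suc)
qed

lemma central_ratio_Suc: "central_ratio (Suc n) = central_ratio n * (2*real n+1)/(2*real n+2)"
proof -
  have "2 * Suc n = 2*n+2" by simp
  then have "central_ratio (Suc n) = real ((2*n) choose n) * 2*(2*real n+1)/(real n+1) / (4 * 4^n)"
    unfolding central_ratio_def using choose_even_central[of n] by (simp del: of_nat_Suc)
  also have "\<dots> = central_ratio n * (2*real n+1)/(2*real n+2)"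
  proof -
    have cancel: "\<And>b x y :: real. x \<ge> 0 \<Longrightarrow> y > 0 \<Longrightarrow> b*2*(2*x+1)/(x+1)/(4*y) = b/y*(2*x+1)/(2*x+2)"
      by simp
    show ?thesis unfolding central_ratio_def by (rule cancel) auto
  qed
  finally show ?thesis .
qed

lemma wallis_central_ratio:
  "(\<Prod>k=1..n. (4*real k^2) / (4*real k^2 - 1)) * (central_ratio n)^2 * (2*real n+1) = 1"
proof (induction n)
  case 0 then show ?case by (simp add: central_ratio_def)
next
  case (Suc n)
  define P where "P = (\<Prod>k=1..n. (4*real k^2) / (4*real k^2 - 1))"
  define c where "c = central_ratio n"
  define x where "x = real n"
  have x0: "x \<ge> 0" by (simp add: x_def)
  have "(\<Prod>k=1..Suc n. (4*real k^2) / (4*real k^2 - 1)) = P * ((4*real (Suc n)^2) / (4*real (Suc n)^2 - 1))"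
    unfolding P_def by (subst prod.nat_ivl_Suc') (simp, rule mult.commute)
  also have "(4*real (Suc n)^2) / (4*real (Suc n)^2 - 1) = 4*(x+1)^2/((2*x+1)*(2*x+3))"
    by (simp add: x_def power2_eq_square algebra_simps)
  finally have "(\<Prod>k=1..Suc n. (4*real k^2) / (4*real k^2 - 1)) * (central_ratio (Suc n))^2 * (2*real (Suc n)+1)
      = P * (4*(x+1)^2/((2*x+1)*(2*x+3))) * (c * (2*x+1)/(2*x+2))^2 * (2*x+3)"
    by (simp add: central_ratio_Suc c_def x_def algebra_simps)
  also have "\<dots> = P * c^2 * (2*x+1)"
  proof -
    have cancel: "\<And>d1 d2 d3 :: real. d1 \<noteq> 0 \<Longrightarrow> d2 \<noteq> 0 \<Longrightarrow> d3 \<noteq> 0 \<Longrightarrow>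
        P * (d1/(d2*d3)) * (c^2*d2^2/d1) * d3 = P*c^2*d2"
      by (simp add: field_simps power2_eq_square)
    have "(c * (2*x+1)/(2*x+2))^2 = c^2*(2*x+1)^2/(4*(x+1)^2)"
      by (simp add: power_divide power_mult_distrib power2_eq_square algebra_simps)
    then show ?thesis using x0 by (simp only:) (rule cancel, auto)
  qed
  also have "\<dots> = 1" using Suc by (simp add: P_def c_def x_def)
  finally show ?case .
qed

lemma linear_at_infinity: "filterlim (\<lambda>n. 2*real n + c) at_infinity sequentially"
proof -
  have "filterlim (\<lambda>n. 2*real n) at_top sequentially"
    by (rule filterlim_tendsto_pos_mult_at_top[OF tendsto_const]) (auto simp: filterlim_real_sequentially)
  then have "filterlim (\<lambda>n. c + 2*real n) at_top sequentially"
    by (rule filterlim_tendsto_add_at_top[OF tendsto_const])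
  then show ?thesis by (intro filterlim_at_top_imp_at_infinity) (simp add: add.commute)
qed

(* Wallis' product gives c_n \<sim> 1 / sqrt (\<pi> n), i.e. c_n sqrt (2n) \<rightarrow> sqrt (2/\<pi>). *)
lemma central_ratio_asymp: "(\<lambda>n. central_ratio n * sqrt (2*real n)) \<longlonglongrightarrow> sqrt (2/pi)"
proof -
  define P where "P n = (\<Prod>k=1..n. (4*real k^2) / (4*real k^2 - 1))" for n
  have P: "P \<longlonglongrightarrow> pi/2" unfolding P_def by (rule wallis)
  have W: "P n * ((central_ratio n)^2 * (2*real n+1)) = 1" for n
    using wallis_central_ratio[of n, folded P_def] by (simp only: mult.assoc)
  have c_sqrt: "central_ratio n * sqrt (2*real n + 1) = sqrt (1 / P n)" for n
  proof -
    have "P n \<noteq> 0" using W[of n] by auto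
    then have "(central_ratio n)^2 * (2*real n+1) = 1 / P n" using W[of n] by (simp add: field_simps)
    then show ?thesis using central_ratio_pos[of n] by (metis real_sqrt_abs real_sqrt_mult abs_of_pos)
  qed
  have "(\<lambda>n. sqrt (1 / P n) * sqrt (2*real n / (2*real n + 1))) \<longlonglongrightarrow> sqrt (1 / (pi/2)) * sqrt 1"
  proof (intro tendsto_intros P)
    have "(\<lambda>n. 1 - 1 / (2*real n + 1)) \<longlonglongrightarrow> 1 - 0"
      by (intro tendsto_intros tendsto_divide_0[OF tendsto_const] linear_at_infinity)
    moreover have "1 - 1 / (2*real n + 1) = 2*real n / (2*real n + 1)" for n
      by (simp add: field_simps)
    ultimately show "(\<lambda>n. 2*real n / (2*real n + 1)) \<longlonglongrightarrow> 1" by simp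
  qed simp
  moreover have "sqrt (1 / P n) * sqrt (2*real n / (2*real n + 1)) = central_ratio n * sqrt (2*real n)" for n
  proof -
    have "sqrt (1 / P n) * sqrt (2*real n / (2*real n + 1))
        = central_ratio n * sqrt (2*real n + 1) * sqrt (2*real n / (2*real n + 1))"
      by (simp add: c_sqrt)
    also have "\<dots> = central_ratio n * sqrt ((2*real n + 1) * (2*real n / (2*real n + 1)))"
      by (metis mult.assoc real_sqrt_mult)
    also have "(2*real n + 1) * (2*real n / (2*real n + 1)) = 2 * real n"
      by (simp add: field_simps)
    finally show ?thesis .
  qed
  moreover have "sqrt (1 / (pi/2)) * sqrt 1 = sqrt (2/pi)" by simp
  ultimately show ?thesis by simp
qed

definition central_binomial_norm :: "nat \<Rightarrow> real" where
  "central_binomial_norm N = real (N choose ((N+1) div 2)) * sqrt (real N) / 2^N"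

lemma central_binomial_norm_limit: "central_binomial_norm \<longlonglongrightarrow> sqrt (2/pi)"
proof (rule limseq_even_odd)
  have "central_binomial_norm (2*n) = central_ratio n * sqrt (2*real n)" for n
    by (simp add: central_binomial_norm_def central_ratio_def power_mult)
  then show "(\<lambda>n. central_binomial_norm (2*n)) \<longlonglongrightarrow> sqrt (2/pi)" using central_ratio_asymp by simp
  have odd: "central_binomial_norm (2*n+1) =
      (central_ratio n * sqrt (2*real n) * sqrt ((2*real n + 1) / (2*real n))) * ((2*real n+1)/(2*real n+2))"
    if "n > 0" for n
  proof -
    have "(2*n+1+1) div 2 = n+1" by simp
    then have "central_binomial_norm (2*n+1) = real ((2*n+1) choose (n+1)) * sqrt (real (2*n+1)) / 2^(2*n+1)"
      unfolding central_binomial_norm_def by simp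
    also have "\<dots> = real ((2*n) choose n) * (2*real n+1)/(real n+1) * sqrt (2*real n+1) / (2*4^n)"
      unfolding choose_odd_central by (simp add: power_mult)
    also have "sqrt (2*real n+1) = sqrt (2*real n) * sqrt ((2*real n + 1) / (2*real n))"
      using that by (simp add: real_sqrt_mult[symmetric])
    finally show ?thesis unfolding central_ratio_def using that by (simp add: field_simps)
  qed
  have "(\<lambda>n. (central_ratio n * sqrt (2*real n) * sqrt ((2*real n + 1) / (2*real n))) * ((2*real n+1)/(2*real n+2)))
      \<longlonglongrightarrow> (sqrt (2/pi) * sqrt 1) * 1"
  proof (intro tendsto_intros central_ratio_asymp)
    have "filterlim (\<lambda>n. 2*real n) at_infinity sequentially"
      using linear_at_infinity[of 0] by simp
    then have "(\<lambda>n. 1 + 1 / (2*real n)) \<longlonglongrightarrow> 1 + 0"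
      by (intro tendsto_intros tendsto_divide_0[OF tendsto_const])
    moreover have "eventually (\<lambda>n. 1 + 1 / (2*real n) = (2*real n + 1) / (2*real n)) sequentially"
      using eventually_gt_at_top[of 0] by eventually_elim (simp add: field_simps)
    ultimately show "(\<lambda>n. (2*real n + 1) / (2*real n)) \<longlonglongrightarrow> 1" by (simp add: tendsto_cong)
    have "(\<lambda>n. 1 - 1/(2*real n+2)) \<longlonglongrightarrow> 1 - 0"
      by (intro tendsto_intros tendsto_divide_0[OF tendsto_const] linear_at_infinity)
    moreover have "1 - 1/(2*real n+2) = (2*real n+1)/(2*real n+2)" for n by (simp add: field_simps)
    ultimately show "(\<lambda>n. (2*real n+1)/(2*real n+2)) \<longlonglongrightarrow> 1" by simp
  qed
  moreover have "eventually (\<lambda>n. central_binomial_norm (2*n+1) =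
      (central_ratio n * sqrt (2*real n) * sqrt ((2*real n + 1) / (2*real n))) * ((2*real n+1)/(2*real n+2))) sequentially"
    using eventually_gt_at_top[of 0] by eventually_elim (rule odd)
  ultimately show "(\<lambda>n. central_binomial_norm (2*n+1)) \<longlonglongrightarrow> sqrt (2/pi)"
    by (simp add: tendsto_cong)
qed

lemma choose_step: "real (Suc k) * real (N choose Suc k) = real (N - k) * real (N choose k)"
proof -
  have "Suc k * (N choose Suc k) = (N - k) * (N choose k)"
    using binomial_absorption[of k N] binomial_absorb_comp[of N k] by simp
  then show ?thesis by (metis of_nat_mult)
qed

lemma choose_prod:
  assumes "B + h \<le> N"
  shows "real (N choose (B + h)) = real (N choose B) * (\<Prod>j<h. (real N - real B - real j) / (real B + real j + 1))"
  using assms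
proof (induction h)
  case 0 then show ?case by simp
next
  case (Suc h)
  have s: "real (Suc (B+h)) * real (N choose Suc (B+h)) = real (N - (B+h)) * real (N choose (B+h))"
    by (rule choose_step)
  have e1: "B + Suc h = Suc (B+h)" by simp
  have e2: "real (N - (B+h)) = real N - real B - real h" using Suc.prems by (simp add: of_nat_diff)
  have e3: "real (Suc (B+h)) = real B + real h + 1" by simp
  have solve: "\<And>a y c w :: real. a > 0 \<Longrightarrow> a * y = c * w \<Longrightarrow> y = w * (c / a)"
    by (simp add: field_simps)
  have step: "real (N choose (B + Suc h)) = real (N choose (B+h)) * ((real N - real B - real h) / (real B + real h + 1))"
    unfolding e1 by (rule solve) (use s e2 e3 in \<open>simp_all add: algebra_simps\<close>)
  have IH: "real (N choose (B + h)) = real (N choose B) * (\<Prod>j<h. (real N - real B - real j) / (real B + real j + 1))"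
    using Suc by simp
  show ?case unfolding step IH prod.lessThan_Suc by (simp only: mult.assoc)
qed

lemma sum_odd: "(\<Sum>j<h. 2 * real j + 1) = real h ^ 2"
  by (induction h) (auto simp: power2_eq_square algebra_simps)

lemma sum_even: "(\<Sum>j<h. 2 * real j + 2) = real h * (real h + 1)"
  by (induction h) (auto simp: algebra_simps)

(* Exponential bounds on a single ratio t_j = (A - j)/(B + j + 1) of choose_prod, where A = \<lfloor>N/2\<rfloor>
   and B = \<lceil>N/2\<rceil>: from 1 + s \<le> e^s applied to t_j - 1 and to 1/t_j - 1. *)
lemma ratio_factor_bounds:
  fixes A B h j :: nat
  assumes AB: "A \<le> B" "B \<le> A + 1" and hA: "h \<le> A" and j: "j < h"
  shows "exp (- (2 * real j + 2) / (real A - real h + 1)) \<le> (real A - real j) / (real B + real j + 1)"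
    and "(real A - real j) / (real B + real j + 1) \<le> exp (- (2 * real j + 1) / (real B + real h))"
proof -
  define t where "t = (real A - real j) / (real B + real j + 1)"
  have Aj: "real A - real j > 0" using j hA by simp
  then have tp: "t > 0" by (simp add: t_def)
  have "1 / t \<le> exp (1 / t - 1)" using exp_ge_add_one_self[of "1 / t - 1"] by simp
  then have "inverse (exp (1 / t - 1)) \<le> inverse (1 / t)"
    using tp by (intro le_imp_inverse_le) auto
  moreover have "inverse (exp (1 / t - 1)) = exp (1 - 1 / t)"
    by (simp add: exp_minus[symmetric])
  ultimately have "exp (1 - 1 / t) \<le> t" using tp by simp
  moreover have "- (2 * real j + 2) / (real A - real h + 1) \<le> 1 - 1 / t"
  proof -
    have "1 - 1 / t = - ((real B - real A + 2 * real j + 1) / (real A - real j))"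
      using Aj unfolding t_def by (simp add: field_simps)
    moreover have "(real B - real A + 2 * real j + 1) / (real A - real j) \<le> (2 * real j + 2) / (real A - real j)"
      using AB Aj by (intro divide_right_mono) auto
    moreover have "(2 * real j + 2) / (real A - real j) \<le> (2 * real j + 2) / (real A - real h + 1)"
      using j hA by (intro divide_left_mono) auto
    moreover have "- (2 * real j + 2) / (real A - real h + 1) = - ((2 * real j + 2) / (real A - real h + 1))"
      by (rule minus_divide_left[symmetric])
    ultimately show ?thesis by linarith
  qed
  ultimately show "exp (- (2 * real j + 2) / (real A - real h + 1)) \<le> (real A - real j) / (real B + real j + 1)"
    unfolding t_def[symmetric] by (meson exp_le_cancel_iff order_trans)
  have "t \<le> exp (t - 1)" using exp_ge_add_one_self[of "t - 1"] by simp
  also have "t - 1 = - ((real B - real A + 2 * real j + 1) / (real B + real j + 1))"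
    unfolding t_def by (simp add: field_simps)
  also have "\<dots> \<le> - ((2 * real j + 1) / (real B + real h))"
  proof -
    have "(2 * real j + 1) / (real B + real h) \<le> (2 * real j + 1) / (real B + real j + 1)"
      using j by (intro divide_left_mono) auto
    also have "\<dots> \<le> (real B - real A + 2 * real j + 1) / (real B + real j + 1)"
      using AB by (intro divide_right_mono) auto
    finally show ?thesis by linarith
  qed
  also have "\<dots> = - (2 * real j + 1) / (real B + real h)"
    by (rule minus_divide_left)
  finally show "(real A - real j) / (real B + real j + 1) \<le> exp (- (2 * real j + 1) / (real B + real h))"
    unfolding t_def by simp
qed

(* Two-sided exponential bounds on C(N,M) / C(N,\<lceil>N/2\<rceil>) for M = \<lceil>N/2\<rceil> + h: multiply the
   bounds of ratio_factor_bounds over j < h, using \<Sum>(2j+1) = h^2 and \<Sum>(2j+2) = h(h+1). *)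
lemma ratio_bounds:
  fixes N M :: nat
  defines "A \<equiv> N div 2" and "B \<equiv> N - N div 2"
  defines "h \<equiv> M - (N - N div 2)"
  assumes NM: "N \<le> 2 * M" "M \<le> N"
  shows "exp (- (real h * (real h + 1)) / (real A - real h + 1)) \<le> real (N choose M) / real (N choose B)"
    and "real (N choose M) / real (N choose B) \<le> exp (- (real h ^ 2) / (real B + real h))"
proof -
  have AB: "A + B = N" "A \<le> B" "B \<le> A + 1" by (auto simp: A_def B_def)
  have Mh: "M = B + h" using NM by (auto simp: h_def B_def)
  have hA: "h \<le> A" using NM AB Mh by auto
  define t where "t j = (real A - real j) / (real B + real j + 1)" for j
  have ratio: "real (N choose M) / real (N choose B) = (\<Prod>j<h. t j)"
  proof -
    have NAB: "real N - real B = real A" using AB by (metis add_diff_cancel_right' of_nat_add)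
    have "real (N choose M) = real (N choose B) * (\<Prod>j<h. t j)"
      unfolding Mh t_def NAB[symmetric] by (rule choose_prod) (use Mh NM in simp)
    moreover have "real (N choose B) > 0" using AB by simp
    ultimately show ?thesis by simp
  qed
  have tpos: "t j > 0" if "j < h" for j using that hA by (simp add: t_def)
  have "(\<Prod>j<h. t j) \<le> (\<Prod>j<h. exp (- (2 * real j + 1) / (real B + real h)))"
    using tpos ratio_factor_bounds(2)[OF AB(2,3) hA] by (intro prod_mono) (auto simp: t_def less_imp_le)
  also have "\<dots> = exp (\<Sum>j<h. - (2 * real j + 1) / (real B + real h))" by (simp add: exp_sum)
  also have "(\<Sum>j<h. - (2 * real j + 1) / (real B + real h)) = - (\<Sum>j<h. 2 * real j + 1) / (real B + real h)"
    by (simp only: sum_divide_distrib[symmetric] sum_negf)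
  finally show "real (N choose M) / real (N choose B) \<le> exp (- (real h ^ 2) / (real B + real h))"
    unfolding ratio sum_odd .
  have "exp (- (real h * (real h + 1)) / (real A - real h + 1)) = exp (- (\<Sum>j<h. 2 * real j + 2) / (real A - real h + 1))"
    by (simp only: sum_even)
  also have "- (\<Sum>j<h. 2 * real j + 2) / (real A - real h + 1) = (\<Sum>j<h. - (2 * real j + 2) / (real A - real h + 1))"
    by (simp only: sum_divide_distrib[symmetric] sum_negf)
  also have "exp \<dots> = (\<Prod>j<h. exp (- (2 * real j + 2) / (real A - real h + 1)))" by (simp add: exp_sum)
  also have "\<dots> \<le> (\<Prod>j<h. t j)"
    using ratio_factor_bounds(1)[OF AB(2,3) hA] by (intro prod_mono) (auto simp: t_def)
  finally show "exp (- (real h * (real h + 1)) / (real A - real h + 1)) \<le> real (N choose M) / real (N choose B)"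
    unfolding ratio .
qed

(* The centred quantities behind the binomial ratio: if (2M - N)/sqrt N \<rightarrow> b with M \<ge> N/2, then
   h = M - \<lceil>N/2\<rceil> satisfies h/sqrt N \<rightarrow> b/2 and h/N \<rightarrow> 0, and both halves \<lfloor>N/2\<rfloor>, \<lceil>N/2\<rceil> are
   \<sim> N/2.  The parity defect d = N - 2\<lfloor>N/2\<rfloor> \<in> {0,1} is negligible on both scales. *)
lemma binomial_centering_limits:
  fixes N M :: "nat \<Rightarrow> nat" and b :: real
  assumes NM: "\<And>r. N r \<le> 2 * M r"
    and Ninf: "filterlim N at_top sequentially"
    and lim: "((\<lambda>r. (2*real (M r) - real (N r)) / sqrt (real (N r))) \<longlongrightarrow> b) sequentially"
  shows "((\<lambda>r. real (M r - (N r - N r div 2)) / sqrt (real (N r))) \<longlongrightarrow> b/2) sequentially"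
    and "((\<lambda>r. real (M r - (N r - N r div 2)) / real (N r)) \<longlongrightarrow> 0) sequentially"
    and "((\<lambda>r. real (N r div 2) / real (N r)) \<longlongrightarrow> 1/2) sequentially"
    and "((\<lambda>r. real (N r - N r div 2) / real (N r)) \<longlongrightarrow> 1/2) sequentially"
proof -
  define h where "h r = M r - (N r - N r div 2)" for r
  define d where "d r = real (N r) - 2 * real (N r div 2)" for r
  define y where "y r = real (h r) / sqrt (real (N r))" for r
  have evN: "eventually (\<lambda>r. 1 \<le> N r) sequentially" using Ninf by (simp add: filterlim_at_top)
  have realN: "filterlim (\<lambda>r. real (N r)) at_top sequentially"
    by (rule filterlim_compose[OF filterlim_real_sequentially Ninf])
  have inv_sqrt: "((\<lambda>r. 1 / sqrt (real (N r))) \<longlongrightarrow> 0) sequentially"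
    by (intro tendsto_divide_0[OF tendsto_const] filterlim_at_top_imp_at_infinity
        filterlim_compose[OF sqrt_at_top realN])
  have inv_N: "((\<lambda>r. 1 / real (N r)) \<longlongrightarrow> 0) sequentially"
    by (intro tendsto_divide_0[OF tendsto_const] filterlim_at_top_imp_at_infinity realN)
  have d01: "0 \<le> d r" "d r \<le> 1" for r unfolding d_def by linarith+
  have d_sqrt: "((\<lambda>r. d r / sqrt (real (N r))) \<longlongrightarrow> 0) sequentially"
    by (rule Lim_null_comparison[OF always_eventually inv_sqrt]) (simp add: d01 divide_right_mono)
  have d_N: "((\<lambda>r. d r / real (N r)) \<longlongrightarrow> 0) sequentially"
    by (rule Lim_null_comparison[OF always_eventually inv_N]) (simp add: d01 divide_right_mono)
  have y: "(y \<longlongrightarrow> b/2) sequentially"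
  proof -
    have "2 * real (M r) - real (N r) = 2 * real (h r) + d r" for r
    proof -
      have "M r \<ge> N r - N r div 2" using NM[of r] by linarith
      then show ?thesis unfolding h_def d_def by (simp add: of_nat_diff)
    qed
    then have "y = (\<lambda>r. ((2*real (M r) - real (N r)) / sqrt (real (N r)) - d r / sqrt (real (N r))) / 2)"
      unfolding y_def by (simp add: add_divide_distrib)
    moreover have "((\<lambda>r. ((2*real (M r) - real (N r)) / sqrt (real (N r)) - d r / sqrt (real (N r))) / 2)
        \<longlongrightarrow> (b - 0) / 2) sequentially"
      by (intro tendsto_intros lim d_sqrt) simp
    ultimately show ?thesis by simp
  qed
  then show "((\<lambda>r. real (M r - (N r - N r div 2)) / sqrt (real (N r))) \<longlongrightarrow> b/2) sequentially"
    unfolding y_def h_def .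
  have "(\<lambda>r. real (h r) / real (N r)) = (\<lambda>r. y r * (1 / sqrt (real (N r))))"
    unfolding y_def by (rule ext) (simp add: real_sqrt_mult[symmetric])
  then show "((\<lambda>r. real (M r - (N r - N r div 2)) / real (N r)) \<longlongrightarrow> 0) sequentially"
    using tendsto_mult[OF y inv_sqrt] unfolding h_def by simp
  have AN: "((\<lambda>r. real (N r div 2) / real (N r)) \<longlongrightarrow> 1/2) sequentially"
  proof -
    have "eventually (\<lambda>r. 1/2 - (d r / real (N r)) / 2 = real (N r div 2) / real (N r)) sequentially"
      using evN by eventually_elim (simp add: d_def field_simps)
    moreover have "((\<lambda>r. 1/2 - (d r / real (N r)) / 2) \<longlongrightarrow> 1/2 - 0/2) sequentially"
      by (intro tendsto_intros d_N) simp_all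
    ultimately show ?thesis by (simp add: tendsto_cong)
  qed
  then show "((\<lambda>r. real (N r div 2) / real (N r)) \<longlongrightarrow> 1/2) sequentially" .
  have "eventually (\<lambda>r. 1 - real (N r div 2) / real (N r) = real (N r - N r div 2) / real (N r)) sequentially"
    using evN by eventually_elim (simp add: field_simps of_nat_diff)
  moreover have "((\<lambda>r. 1 - real (N r div 2) / real (N r)) \<longlongrightarrow> 1 - 1/2) sequentially"
    by (intro tendsto_intros AN)
  ultimately show "((\<lambda>r. real (N r - N r div 2) / real (N r)) \<longlongrightarrow> 1/2) sequentially"
    by (simp add: tendsto_cong)
qed

(* If (2M - N)/sqrt N \<rightarrow> b with M \<ge> N/2, then C(N,M) / C(N,\<lceil>N/2\<rceil>) \<rightarrow> exp (-b^2/2): by the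
   centering limits both exponents in ratio_bounds tend to b^2/2. *)
lemma binomial_ratio_limit:
  fixes N M :: "nat \<Rightarrow> nat" and b :: real
  assumes NM: "\<And>r. N r \<le> 2 * M r" "\<And>r. M r \<le> N r"
    and Ninf: "filterlim N at_top sequentially"
    and lim: "((\<lambda>r. (2*real (M r) - real (N r)) / sqrt (real (N r))) \<longlongrightarrow> b) sequentially"
  shows "((\<lambda>r. real (N r choose M r) / real (N r choose (N r - N r div 2))) \<longlongrightarrow> exp (-(b^2)/2)) sequentially"
proof -
  define A where "A r = N r div 2" for r
  define B where "B r = N r - N r div 2" for r
  define h where "h r = M r - (N r - N r div 2)" for r
  define y where "y r = real (h r) / sqrt (real (N r))" for r
  define z where "z r = real (h r) / real (N r)" for r
  note centering = binomial_centering_limits[OF NM(1) Ninf lim, folded h_def A_def B_def]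
  have y: "(y \<longlongrightarrow> b/2) sequentially" unfolding y_def by (rule centering(1))
  have z: "(z \<longlongrightarrow> 0) sequentially" unfolding z_def by (rule centering(2))
  have AN: "((\<lambda>r. real (A r) / real (N r)) \<longlongrightarrow> 1/2) sequentially" by (rule centering(3))
  have BN: "((\<lambda>r. real (B r) / real (N r)) \<longlongrightarrow> 1/2) sequentially" by (rule centering(4))
  have hA: "h r \<le> A r" for r unfolding h_def A_def using NM(2)[of r] by arith
  have evN: "eventually (\<lambda>r. 1 \<le> N r) sequentially" using Ninf by (simp add: filterlim_at_top)
  have inv_N: "((\<lambda>r. 1 / real (N r)) \<longlongrightarrow> 0) sequentially"
    by (intro tendsto_divide_0[OF tendsto_const] filterlim_at_top_imp_at_infinity
        filterlim_compose[OF filterlim_real_sequentially Ninf])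
  define U where "U r = real (h r) ^ 2 / (real (B r) + real (h r))" for r
  define L where "L r = real (h r) * (real (h r) + 1) / (real (A r) - real (h r) + 1)" for r
  have scaled: "real (h r) ^ 2 / real (N r) = y r ^ 2" "real (h r) / real (N r) = z r"
    if "1 \<le> N r" for r
    using that by (simp_all add: y_def z_def power_divide)
  have U: "(U \<longlongrightarrow> b^2/2) sequentially"
  proof -
    have "((\<lambda>r. y r ^ 2 / (real (B r) / real (N r) + z r)) \<longlongrightarrow> (b/2)^2 / (1/2 + 0)) sequentially"
      by (intro tendsto_intros y BN z) simp
    moreover have "eventually (\<lambda>r. y r ^ 2 / (real (B r) / real (N r) + z r) = U r) sequentially"
      using evN
    proof eventually_elim
      case (elim r)
      then have "real (N r) > 0" by simp
      then show ?case unfolding U_def scaled[OF elim, symmetric] by (simp add: field_simps)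
    qed
    ultimately show ?thesis by (simp add: tendsto_cong power2_eq_square)
  qed
  have L: "(L \<longlongrightarrow> b^2/2) sequentially"
  proof -
    have "((\<lambda>r. (y r ^ 2 + z r) / (real (A r) / real (N r) - z r + 1 / real (N r)))
        \<longlongrightarrow> ((b/2)^2 + 0) / (1/2 - 0 + 0)) sequentially"
      by (intro tendsto_intros y AN z inv_N) simp
    moreover have "eventually (\<lambda>r. (y r ^ 2 + z r) / (real (A r) / real (N r) - z r + 1 / real (N r)) = L r) sequentially"
      using evN
    proof eventually_elim
      case (elim r)
      have num: "real (h r) ^ 2 / real (N r) + real (h r) / real (N r) = real (h r) * (real (h r) + 1) / real (N r)"
        by (simp add: add_divide_distrib power2_eq_square algebra_simps)
      have den: "real (A r) / real (N r) - real (h r) / real (N r) + 1 / real (N r)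
          = (real (A r) - real (h r) + 1) / real (N r)"
        by (simp add: add_divide_distrib diff_divide_distrib)
      have "real (N r) > 0" using elim by simp
      then show ?case unfolding L_def scaled[OF elim, symmetric] num den by simp
    qed
    ultimately show ?thesis by (simp add: tendsto_cong power2_eq_square)
  qed
  show ?thesis
  proof (rule real_tendsto_sandwich)
    show "eventually (\<lambda>r. exp (- L r) \<le> real (N r choose M r) / real (N r choose (N r - N r div 2))) sequentially"
      using evN by eventually_elim
        (unfold L_def A_def h_def minus_divide_left, rule ratio_bounds(1)[OF NM(1) NM(2)])
    show "eventually (\<lambda>r. real (N r choose M r) / real (N r choose (N r - N r div 2)) \<le> exp (- U r)) sequentially"
      using evN by eventually_elim
        (unfold U_def B_def h_def minus_divide_left, rule ratio_bounds(2)[OF NM(1) NM(2)])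
    show "((\<lambda>r. exp (- L r)) \<longlongrightarrow> exp (-(b^2)/2)) sequentially"
      using tendsto_exp[OF tendsto_minus[OF L]] by (simp only: minus_divide_left)
    show "((\<lambda>r. exp (- U r)) \<longlongrightarrow> exp (-(b^2)/2)) sequentially"
      using tendsto_exp[OF tendsto_minus[OF U]] by (simp only: minus_divide_left)
  qed
qed

(* By symmetry C(N,M) = C(N,N-M) we may assume
   M \<ge> N/2; then multiply the central asymptotics by the ratio limit. *)
lemma binomial_local_limit:
  fixes N M :: "nat \<Rightarrow> nat" and a :: real
  assumes NM: "\<And>r. M r \<le> N r"
    and Ninf: "filterlim N at_top sequentially"
    and lim: "((\<lambda>r. (2*real (M r) - real (N r)) / sqrt (real (N r))) \<longlongrightarrow> a) sequentially"
  shows "((\<lambda>r. real (N r choose M r) * sqrt (real (N r)) / 2^(N r)) \<longlongrightarrow> sqrt (2/pi) * exp (-(a^2)/2)) sequentially"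
proof -
  define M' where "M' r = max (M r) (N r - M r)" for r
  have M'_ge: "N r \<le> 2 * M' r" and M'_le: "M' r \<le> N r" for r
    unfolding M'_def using NM[of r] by auto
  have choose_M': "N r choose M' r = N r choose M r" for r
    unfolding M'_def using binomial_symmetric[OF NM[of r]] NM[of r] by (auto simp: max_def)
  have abs_eq: "(2*real (M' r) - real (N r)) / sqrt (real (N r)) = \<bar>(2*real (M r) - real (N r)) / sqrt (real (N r))\<bar>" for r
  proof -
    have "2*real (M' r) - real (N r) = \<bar>2*real (M r) - real (N r)\<bar>"
      unfolding M'_def using NM[of r] by (auto simp: max_def of_nat_diff)
    then show ?thesis by (simp add: abs_divide)
  qed
  have lim': "((\<lambda>r. (2*real (M' r) - real (N r)) / sqrt (real (N r))) \<longlongrightarrow> \<bar>a\<bar>) sequentially"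
    unfolding abs_eq by (rule tendsto_rabs[OF lim])
  have "((\<lambda>r. central_binomial_norm (N r) * (real (N r choose M' r) / real (N r choose (N r - N r div 2))))
      \<longlongrightarrow> sqrt (2/pi) * exp (-(\<bar>a\<bar>^2)/2)) sequentially"
    by (intro tendsto_mult filterlim_compose[OF central_binomial_norm_limit Ninf]
        binomial_ratio_limit[OF M'_ge M'_le Ninf lim'])
  moreover have "central_binomial_norm (N r) * (real (N r choose M' r) / real (N r choose (N r - N r div 2)))
      = real (N r choose M r) * sqrt (real (N r)) / 2^(N r)" for r
  proof -
    have cancel: "\<And>c s t m :: real. c > 0 \<Longrightarrow> c * s / t * (m / c) = m * s / t" by simp
    have "(N r + 1) div 2 = N r - N r div 2" by linarith
    then show ?thesis unfolding central_binomial_norm_def choose_M' by (simp only:) (rule cancel, simp)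
  qed
  ultimately show ?thesis by simp
qed

lemma ratio_const_lim: "((\<lambda>r. real r / (real r - c)) \<longlongrightarrow> 1) sequentially"
proof -
  have "((\<lambda>r. 1 / (1 - c / real r)) \<longlongrightarrow> 1 / (1 - 0)) sequentially"
    by (intro tendsto_intros tendsto_divide_0[OF tendsto_const] filterlim_at_top_imp_at_infinity
        filterlim_real_sequentially) simp
  moreover have "eventually (\<lambda>r. 1 / (1 - c / real r) = real r / (real r - c)) sequentially"
    using eventually_gt_at_top[of "nat \<lceil>\<bar>c\<bar>\<rceil> + 1"]
  proof eventually_elim
    case (elim r)
    then have "real r > \<bar>c\<bar>" by linarith
    then have "real r \<noteq> 0" "real r - c \<noteq> 0" by auto
    then show ?case by (simp add: field_simps)
  qed
  ultimately show ?thesis by (simp add: tendsto_cong)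
qed

lemma inv_sqrt_lim: "((\<lambda>r. 1 / sqrt (real r - c)) \<longlongrightarrow> 0) sequentially"
proof -
  have "filterlim (\<lambda>r. real r - c) at_top sequentially"
    by (rule filterlim_tendsto_add_at_top[OF tendsto_const filterlim_real_sequentially, of "-c", simplified])
  then have "filterlim (\<lambda>r. sqrt (real r - c)) at_top sequentially"
    by (rule filterlim_compose[OF sqrt_at_top])
  then show ?thesis by (intro tendsto_divide_0[OF tendsto_const] filterlim_at_top_imp_at_infinity)
qed

(* Under the hypotheses of the main theorem, the nonzero entries of column p_r sit at position
   m_r = p_r + q \<in> [r]; the two blocks of distances have lengths M_r = m_r - 1 and R_r = r - m_r,
   both \<sim> r/2. *)
lemma row_position_limits:
  fixes n q :: nat and p :: "nat \<Rightarrow> int" and a :: real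
  assumes q: "q \<in> {1..n}"
    and prange: "\<forall>r\<ge>n. 0 \<le> p r \<and> p r \<le> int r - int n"
    and lim: "((\<lambda>r. (2 * real_of_int (p r) - real r) / sqrt (real r)) \<longlongrightarrow> a) sequentially"
  shows "((\<lambda>r. real (nat (p r) + q - 1) / real r) \<longlongrightarrow> 1/2) sequentially"
    and "((\<lambda>r. real (r - (nat (p r) + q)) / real r) \<longlongrightarrow> 1/2) sequentially"
proof -
  define P where "P r = nat (p r)" for r
  define v where "v r = (2 * real_of_int (p r) - real r) / sqrt (real r)" for r
  have q1: "1 \<le> q" "q \<le> n" using q by auto
  have evn: "eventually (\<lambda>r. n + 1 \<le> r) sequentially" by (rule eventually_ge_at_top)
  have hP: "real (P r) = real_of_int (p r)" "P r + q \<le> r" if "n \<le> r" for r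
    using prange that q1 by (auto simp: P_def)
  have inv_r: "((\<lambda>r. 1 / real r) \<longlongrightarrow> (0::real)) sequentially"
    by (intro tendsto_divide_0[OF tendsto_const] filterlim_at_top_imp_at_infinity filterlim_real_sequentially)
  have Pr: "((\<lambda>r. real (P r) / real r) \<longlongrightarrow> 1/2) sequentially"
  proof -
    have "((\<lambda>r. 1/2 + v r * (1 / sqrt (real r)) / 2) \<longlongrightarrow> 1/2 + a * 0 / 2) sequentially"
      using lim inv_sqrt_lim[of 0] unfolding v_def by (intro tendsto_intros) auto
    moreover have "eventually (\<lambda>r. 1/2 + v r * (1 / sqrt (real r)) / 2 = real (P r) / real r) sequentially"
      using evn
    proof eventually_elim
      case (elim r)
      have "sqrt (real r) * sqrt (real r) = real r" "real r > 0" using elim by auto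
      then show ?case unfolding v_def hP(1)[of r] using elim hP(1)[of r] by (simp add: field_simps)
    qed
    ultimately show ?thesis by (simp add: tendsto_cong)
  qed
  show "((\<lambda>r. real (nat (p r) + q - 1) / real r) \<longlongrightarrow> 1/2) sequentially"
  proof -
    have "((\<lambda>r. real (P r) / real r + (real q - 1) * (1 / real r)) \<longlongrightarrow> 1/2 + (real q - 1) * 0) sequentially"
      by (intro tendsto_intros Pr inv_r)
    moreover have "real (P r) / real r + (real q - 1) * (1 / real r) = real (nat (p r) + q - 1) / real r" for r
      unfolding P_def using q1 by (simp add: of_nat_diff add_divide_distrib diff_divide_distrib)
    ultimately show ?thesis by simp
  qed
  show "((\<lambda>r. real (r - (nat (p r) + q)) / real r) \<longlongrightarrow> 1/2) sequentially"
  proof -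
    have "((\<lambda>r. 1 - real (P r) / real r - real q * (1 / real r)) \<longlongrightarrow> 1 - 1/2 - real q * 0) sequentially"
      by (intro tendsto_intros Pr inv_r)
    moreover have "eventually (\<lambda>r. 1 - real (P r) / real r - real q * (1 / real r) = real (r - (nat (p r) + q)) / real r) sequentially"
      using evn
    proof eventually_elim
      case (elim r)
      then have "P r + q \<le> r" "real r > 0" using hP(2)[of r] by auto
      then show ?case unfolding P_def by (simp add: of_nat_diff field_simps)
    qed
    ultimately show ?thesis by (simp add: tendsto_cong)
  qed
qed

lemma row_position_fluctuation:
  fixes n q :: nat and p :: "nat \<Rightarrow> int" and a :: real
  assumes n2: "n \<ge> 2" and q: "q \<in> {1..n}"
    and prange: "\<forall>r\<ge>n. 0 \<le> p r \<and> p r \<le> int r - int n"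
    and lim: "((\<lambda>r. (2 * real_of_int (p r) - real r) / sqrt (real r)) \<longlongrightarrow> a) sequentially"
  shows "((\<lambda>r. (2 * real (nat (p r) + q - 1) - real (r - 1)) / sqrt (real (r - 1))) \<longlongrightarrow> a) sequentially"
proof -
  define v where "v r = (2 * real_of_int (p r) - real r) / sqrt (real r)" for r
  have q1: "1 \<le> q" "q \<le> n" using q by auto
  have evn: "eventually (\<lambda>r. n + 1 \<le> r) sequentially" by (rule eventually_ge_at_top)
  have "((\<lambda>r. v r * sqrt (real r / (real r - 1)) + (2 * real q - 1) * (1 / sqrt (real r - 1))) \<longlongrightarrow>
      a * sqrt 1 + (2 * real q - 1) * 0) sequentially"
    using lim unfolding v_def by (intro tendsto_intros ratio_const_lim inv_sqrt_lim)
  moreover have "eventually (\<lambda>r. v r * sqrt (real r / (real r - 1)) + (2 * real q - 1) * (1 / sqrt (real r - 1)) =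
      (2 * real (nat (p r) + q - 1) - real (r - 1)) / sqrt (real (r - 1))) sequentially"
    using evn
  proof eventually_elim
    case (elim r)
    have rn: "n \<le> r" using elim by simp
    have rN: "real (r - 1) = real r - 1" using rn n2 by (simp add: of_nat_diff)
    have "0 \<le> p r" using prange rn by auto
    then have rM: "real (nat (p r) + q - 1) = real_of_int (p r) + real q - 1"
      using q1 by (simp add: of_nat_diff)
    have sq: "sqrt (real r / (real r - 1)) = sqrt (real r) / sqrt (real r - 1)" by (simp add: real_sqrt_divide)
    have "sqrt (real r) > 0" "sqrt (real r - 1) > 0" using rn n2 by auto
    then show ?case unfolding rN rM v_def sq by (simp add: field_simps)
  qed
  ultimately show ?thesis by (simp add: tendsto_cong)
qed

lemma esym_product_limit:
  fixes n q :: nat and p :: "nat \<Rightarrow> int" and a :: real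
  assumes q: "q \<in> {1..n}"
    and "\<forall>r\<ge>n. 0 \<le> p r \<and> p r \<le> int r - int n"
    and "((\<lambda>r. (2 * real_of_int (p r) - real r) / sqrt (real r)) \<longlongrightarrow> a) sequentially"
  shows "((\<lambda>r. esym (q-1) (nat (p r) + q - 1) * esym (n-q) (r - (nat (p r) + q))
            * (2^(n-1) * fact (q-1) * fact (n-q)) / real r ^ (2*(n-1))) \<longlongrightarrow> (1/4)^(n-1)) sequentially"
proof -
  define M where "M r = nat (p r) + q - 1" for r
  define R where "R r = r - (nat (p r) + q)" for r
  have q1: "1 \<le> q" "q \<le> n" using q by auto
  have "((\<lambda>r. (esym (q-1) (M r) * 2^(q-1) * fact (q-1) / real r ^ (2*(q-1))) *
             (esym (n-q) (R r) * 2^(n-q) * fact (n-q) / real r ^ (2*(n-q))))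
        \<longlongrightarrow> (1/2)^(2*(q-1)) * (1/2)^(2*(n-q))) sequentially"
    unfolding M_def R_def
    by (intro tendsto_mult esym_scaled_limit row_position_limits[OF assms]) simp_all
  moreover have "(1/2::real)^(2*(q-1)) * (1/2)^(2*(n-q)) = (1/4)^(n-1)"
  proof -
    have e: "q - 1 + (n - q) = n - 1" using q1 by auto
    have "(1/2::real)^(2*(q-1)) * (1/2)^(2*(n-q)) = ((1/2)^2)^(q - 1 + (n - q))"
      by (simp only: power_mult power_add)
    then show ?thesis unfolding e by (simp add: power2_eq_square)
  qed
  moreover have "(esym (q-1) (M r) * 2^(q-1) * fact (q-1) / real r ^ (2*(q-1))) *
             (esym (n-q) (R r) * 2^(n-q) * fact (n-q) / real r ^ (2*(n-q)))
      = esym (q-1) (M r) * esym (n-q) (R r) * (2^(n-1) * fact (q-1) * fact (n-q)) / real r ^ (2*(n-1))" for r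
  proof -
    have "q - 1 + (n - q) = n - 1" "2*(q-1) + 2*(n-q) = 2*(n-1)" using q1 by auto
    then have "(2::real)^(q-1) * 2^(n-q) = 2^(n-1)" "real r^(2*(q-1)) * real r^(2*(n-q)) = real r^(2*(n-1))"
      by (metis power_add)+
    moreover have "(x1 * u1 * f1 / w1) * (x2 * u2 * f2 / w2) = x1 * x2 * (u1 * u2 * f1 * f2) / (w1 * w2)"
      for x1 u1 f1 w1 x2 u2 f2 w2 :: real
      by (simp add: ac_simps)
    ultimately show ?thesis by simp
  qed
  ultimately show ?thesis unfolding M_def R_def by simp
qed

lemma falling_product_ratio_limit: "((\<lambda>r. real r ^ k / (\<Prod>i<k. real (r - 1 - i))) \<longlongrightarrow> 1) sequentially"
proof -
  have "((\<lambda>r. \<Prod>i<k. real r / (real r - (1 + real i))) \<longlongrightarrow> (\<Prod>i<k. (1::real))) sequentially"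
    by (intro tendsto_prod ratio_const_lim)
  moreover have "eventually (\<lambda>r. (\<Prod>i<k. real r / (real r - (1 + real i))) = real r ^ k / (\<Prod>i<k. real (r - 1 - i))) sequentially"
    using eventually_gt_at_top[of k]
  proof eventually_elim
    case (elim r)
    have "(\<Prod>i<k. real r / (real r - (1 + real i))) = (\<Prod>i<k. real r / real (r - 1 - i))"
      using elim by (intro prod.cong refl) (auto simp: of_nat_diff)
    then show ?case by (simp add: prod_dividef)
  qed
  ultimately show ?thesis by (simp add: tendsto_cong)
qed

lemma sqrt_shift_ratio_limit: "((\<lambda>r. sqrt (real r) / sqrt (real (r-1))) \<longlongrightarrow> 1) sequentially"
proof -
  have "((\<lambda>r. sqrt (real r / (real r - 1))) \<longlongrightarrow> sqrt 1) sequentially"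
    by (intro tendsto_intros ratio_const_lim)
  moreover have "eventually (\<lambda>r. sqrt (real r / (real r - 1)) = sqrt (real r) / sqrt (real (r-1))) sequentially"
    using eventually_gt_at_top[of 0] by eventually_elim (simp add: of_nat_diff real_sqrt_divide)
  ultimately show ?thesis by (simp add: tendsto_cong)
qed

lemma column_sum_factorisation:
  fixes n q r P :: nat
  assumes n2: "n \<ge> 2" and q: "q \<in> {1..n}" and r: "n < r" and P: "P \<le> r - n"
  shows "fact (q - 1) * fact (n - q) * sqrt (2 * pi * real r)
             / (2 powr (real r + 2 - 3 * real n) * real r ^ (n - 1))
           * (\<Sum>I\<in>subsets_r n r. pure_diagram n r I P q) / 2
      = sqrt (2*pi) / 2 * 4^(n-1)
        * (real ((r-1) choose (P+q-1)) * sqrt (real (r-1)) / 2^(r-1))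
        * (real r ^ (n-1) / (\<Prod>i<n-1. real (r - 1 - i)))
        * (esym (q-1) (P+q-1) * esym (n-q) (r - (P+q)) * (2^(n-1) * fact (q-1) * fact (n-q))
            / real r ^ (2*(n-1)))
        * (sqrt (real r) / sqrt (real (r-1)))"
proof -
  define Q where "Q = (\<Prod>i<n-1. real (r - 1 - i))"
  have q1: "1 \<le> q" "q \<le> n" using q by auto
  have sum: "(\<Sum>I\<in>subsets_r n r. pure_diagram n r I P q)
      = real ((r-1) choose (P+q-1)) / Q * (esym (q-1) (P+q-1) * esym (n-q) (r - (P+q)))"
  proof -
    have "(\<Sum>I\<in>subsets_r n r. pure_diagram n r I P q)
        = Kcoef n r (P+q) * (esym (q-1) (P+q-1) * esym (n-q) (r - (P+q)))"
      using sum_pure_diagram[of n r P q] n2 r P q by (simp add: mult.assoc)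
    also have "Kcoef n r (P+q) = real ((r-1) choose (P+q-1)) / Q"
      unfolding Q_def using n2 r P q1 by (intro Kcoef_binomial) auto
    finally show ?thesis .
  qed
  have pw: "2 powr (real r + 2 - 3 * real n) = 2^(r-1) / (2^(n-1) * 4^(n-1))"
  proof -
    have "real r + 2 - 3 * real n = real (r-1) - real (3*(n-1))"
      using n2 r by (simp add: of_nat_diff)
    then have "2 powr (real r + 2 - 3 * real n) = 2 powr real (r-1) / 2 powr real (3*(n-1))"
      by (simp only: powr_diff)
    also have "\<dots> = 2^(r-1) / 2^(3*(n-1))"
      by (subst (1 2) powr_realpow) simp_all
    also have "(2::real)^(3*(n-1)) = 2^(n-1) * (2^2)^(n-1)"
      by (simp only: power_mult[symmetric] power_add[symmetric]) simp
    finally show ?thesis by simp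
  qed
  have sq: "sqrt (2 * pi * real r) = sqrt (2*pi) * sqrt (real r)" by (simp add: real_sqrt_mult)
  have X: "real r ^ (2*(n-1)) = real r ^ (n-1) * real r ^ (n-1)" by (simp add: mult_2 power_add)
  have alg: "\<And>F1 F2 s2p sr T X Q C E sN K2 K4 :: real. X > 0 \<Longrightarrow> Q > 0 \<Longrightarrow> sN > 0 \<Longrightarrow> T > 0 \<Longrightarrow>
      K2 > 0 \<Longrightarrow> K4 > 0 \<Longrightarrow>
      F1 * F2 * (s2p * sr) / (T / (K2 * K4) * X) * (C / Q * E) / 2
        = s2p / 2 * K4 * (C * sN / T) * (X / Q) * (E * (K2 * F1 * F2) / (X * X)) * (sr / sN)"
    by (simp add: field_simps)
  have "Q > 0" unfolding Q_def using r by (intro prod_pos) auto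
  moreover have "sqrt (real (r-1)) > 0" using r n2 by simp
  ultimately show ?thesis unfolding sum pw sq X Q_def[symmetric] by (intro alg) (use r n2 in auto)
qed

(* In column_sum_factorisation the binomial
   factor tends to sqrt (2/\<pi>) exp (-a^2/2) by the local limit theorem, the esym factor to (1/4)^(n-1)
   by esym_product_limit, and the two remaining ratios to 1. *)
lemma column_sum_limit:
  fixes n q :: nat and p :: "nat \<Rightarrow> int" and a :: real
  assumes n2: "n \<ge> 2" and q: "q \<in> {1..n}"
    and prange: "\<forall>r\<ge>n. 0 \<le> p r \<and> p r \<le> int r - int n"
    and "((\<lambda>r. (2 * real_of_int (p r) - real r) / sqrt (real r)) \<longlongrightarrow> a) sequentially"
  shows "((\<lambda>r. (fact (q - 1) * fact (n - q) * sqrt (2 * pi * real r)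
             / (2 powr (real r + 2 - 3 * real n) * real r ^ (n - 1)))
           * (\<Sum>I\<in>subsets_r n r. pure_diagram n r I (nat (p r)) q) / 2)
      \<longlongrightarrow> exp (- (a\<^sup>2) / 2)) sequentially"
proof -
  define M where "M r = min (nat (p r) + q - 1) (r - 1)" for r
  define B where "B r = real ((r-1) choose M r) * sqrt (real (r-1)) / 2^(r-1)" for r
  define Q where "Q r = (\<Prod>i<n-1. real (r - 1 - i))" for r
  define E where "E r = esym (q-1) (nat (p r) + q - 1) * esym (n-q) (r - (nat (p r) + q))
      * (2^(n-1) * fact (q-1) * fact (n-q)) / real r ^ (2*(n-1))" for r
  have q1: "1 \<le> q" "q \<le> n" using q by auto
  have evn: "eventually (\<lambda>r. n < r) sequentially" by (rule eventually_gt_at_top)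
  have M_eq: "eventually (\<lambda>r. M r = nat (p r) + q - 1) sequentially"
    using evn
  proof eventually_elim
    case (elim r)
    then have "0 \<le> p r" "p r \<le> int r - int n" using prange by auto
    then have "nat (p r) + q \<le> r" using q1 by linarith
    then show ?case by (simp add: M_def)
  qed
  have binom: "(B \<longlongrightarrow> sqrt (2/pi) * exp (-(a^2)/2)) sequentially"
    unfolding B_def
  proof (rule binomial_local_limit)
    show "filterlim (\<lambda>r. r - 1) at_top sequentially" by (rule filterlim_minus_const_nat_at_top)
    have "eventually (\<lambda>r. (2 * real (M r) - real (r - 1)) / sqrt (real (r - 1))
        = (2 * real (nat (p r) + q - 1) - real (r - 1)) / sqrt (real (r - 1))) sequentially"
      using M_eq by eventually_elim simp
    then show "((\<lambda>r. (2 * real (M r) - real (r - 1)) / sqrt (real (r - 1))) \<longlongrightarrow> a) sequentially"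
      using row_position_fluctuation[OF assms] by (rule tendsto_cong[THEN iffD2])
  qed (simp add: M_def)
  have poly: "((\<lambda>r. real r ^ (n-1) / Q r) \<longlongrightarrow> 1) sequentially"
    unfolding Q_def by (rule falling_product_ratio_limit)
  have esyms: "(E \<longlongrightarrow> (1/4)^(n-1)) sequentially"
    unfolding E_def by (rule esym_product_limit[OF assms(2-4)])
  have lim_prod: "((\<lambda>r. sqrt (2*pi) / 2 * 4^(n-1) * B r * (real r ^ (n-1) / Q r) * E r
        * (sqrt (real r) / sqrt (real (r-1))))
      \<longlongrightarrow> sqrt (2*pi) / 2 * 4^(n-1) * (sqrt (2/pi) * exp (-(a^2)/2)) * 1 * (1/4)^(n-1) * 1) sequentially"
    by (intro tendsto_intros binom poly esyms sqrt_shift_ratio_limit)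
  have const: "sqrt (2*pi) / 2 * 4^(n-1) * (sqrt (2/pi) * exp (-(a^2)/2)) * 1 * (1/4)^(n-1) * 1 = exp (- (a\<^sup>2) / 2)"
  proof -
    have "sqrt (2*pi) * sqrt (2/pi) = 2" by (simp add: real_sqrt_mult[symmetric])
    moreover have "(4::real)^(n-1) * (1/4)^(n-1) = 1" by (simp add: power_one_over)
    ultimately show ?thesis by (simp add: field_simps)
  qed
  have ident: "eventually (\<lambda>r. (fact (q - 1) * fact (n - q) * sqrt (2 * pi * real r)
             / (2 powr (real r + 2 - 3 * real n) * real r ^ (n - 1)))
           * (\<Sum>I\<in>subsets_r n r. pure_diagram n r I (nat (p r)) q) / 2
      = sqrt (2*pi) / 2 * 4^(n-1) * B r * (real r ^ (n-1) / Q r) * E r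
        * (sqrt (real r) / sqrt (real (r-1)))) sequentially"
    using evn M_eq
  proof eventually_elim
    case (elim r)
    have "0 \<le> p r" "p r \<le> int r - int n" using prange elim by auto
    then have "nat (p r) \<le> r - n" by linarith
    then show ?case unfolding B_def Q_def E_def elim(2)
      using column_sum_factorisation[OF n2 q elim(1)] by simp
  qed
  show ?thesis using lim_prod unfolding const by (rule tendsto_cong[OF ident, THEN iffD2])
qed

abbreviation "unif01 \<equiv> uniform_measure lborel {0..1::real}"

lemma unif01_prob: "prob_space unif01"
  by (rule prob_space_uniform_measure) simp_all

lemma Omega_prob: "prob_space (Omega n)"
  unfolding Omega_def by (rule prob_space_PiM) (rule unif01_prob)

lemma coord_measurable_unif:
  assumes "i \<in> subsets_inf n"
  shows "(\<lambda>x. x i) \<in> measurable (Omega n) unif01"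
  unfolding Omega_def using assms by (rule measurable_component_singleton)

lemma coord_measurable:
  assumes "i \<in> subsets_inf n"
  shows "(\<lambda>x. x i) \<in> borel_measurable (Omega n)"
proof -
  have "(\<lambda>x. x i) \<in> measurable (Omega n) unif01" by (rule coord_measurable_unif[OF assms])
  moreover have "measurable (Omega n) unif01 = measurable (Omega n) borel"
    by (rule measurable_cong_sets) simp_all
  ultimately show ?thesis by simp
qed

lemma coord_indep:
  assumes J: "J \<subseteq> subsets_inf n" "finite J" "J \<noteq> {}"
  shows "prob_space.indep_vars (Omega n) (\<lambda>_. borel) (\<lambda>i x. x i) J"
proof -
  interpret U: prob_space unif01 by (rule unif01_prob)
  interpret product_prob_space "\<lambda>_. unif01" "subsets_inf n" by unfold_locales
  have O: "Omega n = PiM (subsets_inf n) (\<lambda>_. unif01)" by (simp add: Omega_def)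
  interpret O: prob_space "Omega n" by (rule Omega_prob)
  show ?thesis
  proof (subst O.indep_vars_iff_distr_eq_PiM')
    show "J \<noteq> {}" by fact
    show "O.random_variable borel (\<lambda>x. x i)" if "i \<in> J" for i
      using coord_measurable[of i n] that J by (auto simp: Omega_def)
    have "distr (Omega n) (PiM J (\<lambda>_. borel)) (\<lambda>x. \<lambda>i\<in>J. x i) = distr (PiM (subsets_inf n) (\<lambda>_. unif01)) (PiM J (\<lambda>_. unif01)) (\<lambda>x. restrict x J)"
      unfolding O by (intro distr_cong) (auto intro!: sets_PiM_cong simp: restrict_def)
    also have "\<dots> = PiM J (\<lambda>_. unif01)" by (rule distr_PiM_restrict_finite) (use J in auto)
    also have "\<dots> = PiM J (\<lambda>i. distr (Omega n) borel (\<lambda>x. x i))"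
    proof (rule PiM_cong)
      fix i assume i: "i \<in> J"
      have "distr (Omega n) borel (\<lambda>x. x i) = distr (PiM (subsets_inf n) (\<lambda>_. unif01)) unif01 (\<lambda>x. x i)"
        unfolding O by (intro distr_cong) auto
      also have "\<dots> = unif01" by (rule PiM_component) (use i J in auto)
      finally show "unif01 = distr (Omega n) borel (\<lambda>x. x i)" by simp
    qed simp
    finally show "distr (Omega n) (PiM J (\<lambda>_. borel)) (\<lambda>x. \<lambda>i\<in>J. x i) = PiM J (\<lambda>i. distr (Omega n) borel (\<lambda>x. x i))" .
  qed
qed

lemma coord_AE:
  assumes "i \<in> subsets_inf n"
  shows "AE x in Omega n. x i \<in> {0..1}"
proof -
  have "AE x in unif01. x \<in> {0..1}" by (rule AE_uniform_measureI) auto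
  then show ?thesis unfolding Omega_def
    using AE_PiM_component[of "subsets_inf n" "\<lambda>_. unif01" i "\<lambda>x. x \<in> {0..1}"] unif01_prob assms by blast
qed

lemma unif01_density: "unif01 = density lborel (\<lambda>x. ennreal (indicator {0..1} x))"
  unfolding uniform_measure_def by (simp add: ennreal_indicator divide_ennreal_def)

lemma unif01_mean: "integral\<^sup>L unif01 (\<lambda>y. y) = (1/2::real)"
proof -
  have "integral\<^sup>L unif01 (\<lambda>y. y) = (\<integral>x. indicator {0..1} x *\<^sub>R x \<partial>lborel)"
    unfolding unif01_density by (rule integral_density) auto
  also have "\<dots> = (\<integral>x. x^1 * indicator {0..1} x \<partial>lborel)" by (simp add: mult.commute)
  also have "\<dots> = 1/2" by (subst integral_power) auto
  finally show ?thesis .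
qed

lemma coord_expect:
  assumes "i \<in> subsets_inf n"
  shows "prob_space.expectation (Omega n) (\<lambda>x. x i) = 1/2"
proof -
  have "prob_space.expectation (Omega n) (\<lambda>x. x i) = integral\<^sup>L (distr (Omega n) unif01 (\<lambda>x. x i)) (\<lambda>y. y)"
    by (rule integral_distr[symmetric]) (use coord_measurable_unif[OF assms] in simp_all)
  also have "distr (Omega n) unif01 (\<lambda>x. x i) = unif01"
    unfolding Omega_def by (rule distr_PiM_component[OF _ assms]) (rule unif01_prob)
  also have "integral\<^sup>L unif01 (\<lambda>y. y) = 1/2" by (rule unif01_mean)
  finally show ?thesis .
qed

lemma hoeffding_weighted_coords:
  fixes w :: "nat set \<Rightarrow> real"
  assumes J: "J \<subseteq> subsets_inf n" "finite J" and wnn: "\<And>I. I \<in> J \<Longrightarrow> w I \<ge> 0"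
    and pos: "(\<Sum>I\<in>J. (w I)\<^sup>2) > 0" and e: "e \<ge> 0"
  shows "measure (Omega n) {x \<in> space (Omega n). \<bar>(\<Sum>I\<in>J. w I * x I) - (\<Sum>I\<in>J. w I) / 2\<bar> \<ge> e}
     \<le> 2 * exp (-2 * e\<^sup>2 / (\<Sum>I\<in>J. (w I)\<^sup>2))"
proof -
  interpret O: prob_space "Omega n" by (rule Omega_prob)
  have Jne: "J \<noteq> {}" using pos by auto
  have ind: "O.indep_vars (\<lambda>_. borel) (\<lambda>I x. w I * x I) J"
    using O.indep_vars_compose2[OF coord_indep[OF J Jne], of "\<lambda>I y. w I * y" "\<lambda>_. borel"] by simp
  have ex: "O.expectation (\<lambda>x. w I * x I) = w I / 2" if "I \<in> J" for I
    using coord_expect[of I n] that J by auto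
  interpret H: Hoeffding_ineq "Omega n" J "\<lambda>I x. w I * x I" "\<lambda>_. 0" w "(\<Sum>I\<in>J. w I) / 2"
  proof unfold_locales
    show "finite J" by fact
    show "O.indep_vars (\<lambda>_. borel) (\<lambda>I x. w I * x I) J" by fact
    fix I assume I: "I \<in> J"
    have ae: "AE x in Omega n. x I \<in> {0..1}" using coord_AE[of I n] I J by auto
    show "AE x in Omega n. w I * x I \<in> {0..w I}"
      using ae
    proof (rule eventually_mono)
      fix x :: "nat set \<Rightarrow> real" assume "x I \<in> {0..1}"
      then show "w I * x I \<in> {0..w I}" using wnn[OF I] by (auto intro: mult_left_le)
    qed
  next
    have "(\<Sum>I\<in>J. O.expectation (\<lambda>x. w I * x I)) = (\<Sum>I\<in>J. w I / 2)"
      by (rule sum.cong[OF refl ex])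
    also have "\<dots> = (\<Sum>I\<in>J. w I) / 2" by (simp add: sum_divide_distrib)
    finally show "(\<Sum>I\<in>J. w I) / 2 \<equiv> \<Sum>I\<in>J. O.expectation (\<lambda>x. w I * x I)"
      by (rule eq_reflection[OF sym])
  qed
  show ?thesis using H.Hoeffding_ineq_abs_ge[OF e] pos by simp
qed

lemma relative_deviation_bound:
  fixes w :: "nat set \<Rightarrow> real" and s \<kappa> :: real
  assumes J: "J \<subseteq> subsets_inf n" "finite J" and wnn: "\<And>I. I \<in> J \<Longrightarrow> w I \<ge> 0"
    and W0: "(\<Sum>I\<in>J. w I) > 0" and s: "s > 0"
    and spread: "\<kappa> * real r \<le> (\<Sum>I\<in>J. w I)\<^sup>2 / (\<Sum>I\<in>J. (w I)\<^sup>2)"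
  shows "measure (Omega n) {x \<in> space (Omega n). (\<Sum>I\<in>J. w I) / s \<le> \<bar>(\<Sum>I\<in>J. w I * x I) - (\<Sum>I\<in>J. w I) / 2\<bar>}
     \<le> 2 * exp (- (2 * \<kappa> / s\<^sup>2)) ^ r"
proof -
  define W where "W = (\<Sum>I\<in>J. w I)"
  define V where "V = (\<Sum>I\<in>J. (w I)\<^sup>2)"
  obtain I0 where I0: "I0 \<in> J" "w I0 > 0"
    using W0 wnn by (metis not_le sum_nonpos)
  have V0: "V > 0" unfolding V_def by (rule sum_pos2[OF J(2) I0(1)]) (use I0 in auto)
  have "measure (Omega n) {x \<in> space (Omega n). W / s \<le> \<bar>(\<Sum>I\<in>J. w I * x I) - W / 2\<bar>}
      \<le> 2 * exp (-2 * (W / s)\<^sup>2 / V)"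
    using hoeffding_weighted_coords[OF J wnn, where e = "W / s"] V0 W0 s by (simp add: W_def V_def)
  also have "-2 * (W / s)\<^sup>2 / V = - (2 / s\<^sup>2) * (W\<^sup>2 / V)"
    by (simp add: power_divide field_simps)
  also have "exp \<dots> \<le> exp (- (2 * \<kappa> / s\<^sup>2) * real r)"
  proof -
    have "2 / s\<^sup>2 * (\<kappa> * real r) \<le> 2 / s\<^sup>2 * (W\<^sup>2 / V)"
      using spread by (intro mult_left_mono) (auto simp: W_def V_def)
    then show ?thesis by simp
  qed
  also have "exp (- (2 * \<kappa> / s\<^sup>2) * real r) = exp (- (2 * \<kappa> / s\<^sup>2)) ^ r"
    by (metis exp_of_nat_mult mult.commute)
  finally show ?thesis unfolding W_def V_def by simp
qed

(* Borel-Cantelli step: if the weights are spread out, in the sense that (\<Sum>w)^2 / \<Sum>w^2 \<ge> \<kappa> r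
   eventually, then the deviation events of relative size 1/(k+1) have exponentially small, hence
   summable, probabilities, so almost surely only finitely many of them occur. *)
lemma weighted_deviation_eventually_small:
  fixes w :: "nat \<Rightarrow> nat set \<Rightarrow> real" and S :: "nat \<Rightarrow> nat set set" and \<kappa> :: real
  assumes S: "\<And>r. S r \<subseteq> subsets_inf n" "\<And>r. finite (S r)"
    and wnn: "\<And>r I. I \<in> S r \<Longrightarrow> w r I \<ge> 0"
    and kpos: "\<kappa> > 0"
    and ev: "eventually (\<lambda>r. (\<Sum>I\<in>S r. w r I) > 0 \<and>
               \<kappa> * real r \<le> (\<Sum>I\<in>S r. w r I)\<^sup>2 / (\<Sum>I\<in>S r. (w r I)\<^sup>2)) sequentially"
  shows "AE x in Omega n. eventually (\<lambda>r. (\<Sum>I\<in>S r. w r I) > 0 \<and>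
           \<bar>(\<Sum>I\<in>S r. w r I * x I) - (\<Sum>I\<in>S r. w r I) / 2\<bar> < (\<Sum>I\<in>S r. w r I) / real (Suc k)) sequentially"
proof -
  define W where "W r = (\<Sum>I\<in>S r. w r I)" for r
  define C where "C r = (W r > 0 \<and> \<kappa> * real r \<le> (W r)\<^sup>2 / (\<Sum>I\<in>S r. (w r I)\<^sup>2))" for r
  define F where "F r x = \<bar>(\<Sum>I\<in>S r. w r I * x I) - W r / 2\<bar>" for r and x :: "nat set \<Rightarrow> real"
  define A where "A r = (if C r then {x \<in> space (Omega n). W r / real (Suc k) \<le> F r x} else {})" for r
  have A_sets: "A r \<in> sets (Omega n)" for r
  proof -
    have [measurable]: "F r \<in> borel_measurable (Omega n)"
    proof -
      have "(\<lambda>x. (\<Sum>I\<in>S r. w r I * x I)) \<in> borel_measurable (Omega n)"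
        by (intro borel_measurable_sum borel_measurable_times borel_measurable_const coord_measurable)
          (use S in auto)
      then show ?thesis unfolding F_def by measurable
    qed
    show ?thesis unfolding A_def by simp
  qed
  define \<delta> where "\<delta> = 2 * \<kappa> / (real (Suc k))\<^sup>2"
  have A_bound: "measure (Omega n) (A r) \<le> 2 * exp (- \<delta>) ^ r" for r
    using relative_deviation_bound[OF S wnn, where r = r and s = "real (Suc k)" and \<kappa> = \<kappa>]
    by (auto simp: A_def C_def F_def W_def \<delta>_def)
  have "AE x in Omega n. eventually (\<lambda>r. x \<in> space (Omega n) - A r) sequentially"
  proof (rule borel_cantelli_AE1[OF A_sets])
    show "emeasure (Omega n) (A r) < \<infinity>" for r
      unfolding infinity_ennreal_def by (meson Omega_prob less_top prob_space_imp_subprob_space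
          subprob_space.emeasure_subprob_space_less_top)
    show "summable (\<lambda>r. measure (Omega n) (A r))"
    proof (rule summable_comparison_test[where g="\<lambda>r. 2 * exp (- \<delta>) ^ r"])
      show "\<exists>N. \<forall>r\<ge>N. norm (measure (Omega n) (A r)) \<le> 2 * exp (- \<delta>) ^ r"
        using A_bound by auto
      show "summable (\<lambda>r. 2 * exp (- \<delta>) ^ r)"
        using kpos by (intro summable_mult summable_geometric) (simp add: \<delta>_def)
    qed
  qed
  then show ?thesis
  proof (rule eventually_mono)
    fix x assume "eventually (\<lambda>r. x \<in> space (Omega n) - A r) sequentially"
    then show "eventually (\<lambda>r. (\<Sum>I\<in>S r. w r I) > 0 \<and>
        \<bar>(\<Sum>I\<in>S r. w r I * x I) - (\<Sum>I\<in>S r. w r I) / 2\<bar> < (\<Sum>I\<in>S r. w r I) / real (Suc k)) sequentially"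
      using ev unfolding W_def[symmetric] C_def[symmetric]
      by eventually_elim (auto simp: A_def F_def C_def mult.commute)
  qed
qed

lemma weighted_slln:
  fixes w :: "nat \<Rightarrow> nat set \<Rightarrow> real" and S :: "nat \<Rightarrow> nat set set" and \<kappa> :: real
  assumes S: "\<And>r. S r \<subseteq> subsets_inf n" "\<And>r. finite (S r)"
    and wnn: "\<And>r I. I \<in> S r \<Longrightarrow> w r I \<ge> 0"
    and kpos: "\<kappa> > 0"
    and ev: "eventually (\<lambda>r. (\<Sum>I\<in>S r. w r I) > 0 \<and>
               \<kappa> * real r \<le> (\<Sum>I\<in>S r. w r I)\<^sup>2 / (\<Sum>I\<in>S r. (w r I)\<^sup>2)) sequentially"
  shows "AE x in Omega n. ((\<lambda>r. (\<Sum>I\<in>S r. x I * w r I) / (\<Sum>I\<in>S r. w r I)) \<longlongrightarrow> 1/2) sequentially"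
proof -
  have "AE x in Omega n. \<forall>k. eventually (\<lambda>r. (\<Sum>I\<in>S r. w r I) > 0 \<and>
      \<bar>(\<Sum>I\<in>S r. w r I * x I) - (\<Sum>I\<in>S r. w r I) / 2\<bar> < (\<Sum>I\<in>S r. w r I) / real (Suc k)) sequentially"
    unfolding AE_all_countable by (intro allI weighted_deviation_eventually_small[OF S wnn kpos ev])
  then show ?thesis
  proof (rule eventually_mono)
    fix x :: "nat set \<Rightarrow> real"
    assume x: "\<forall>k. eventually (\<lambda>r. (\<Sum>I\<in>S r. w r I) > 0 \<and>
      \<bar>(\<Sum>I\<in>S r. w r I * x I) - (\<Sum>I\<in>S r. w r I) / 2\<bar> < (\<Sum>I\<in>S r. w r I) / real (Suc k)) sequentially"
    show "((\<lambda>r. (\<Sum>I\<in>S r. x I * w r I) / (\<Sum>I\<in>S r. w r I)) \<longlongrightarrow> 1/2) sequentially"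
    proof (rule tendstoI)
      fix e :: real assume "e > 0"
      then obtain k where k: "inverse (real (Suc k)) < e" using reals_Archimedean by blast
      show "eventually (\<lambda>r. dist ((\<Sum>I\<in>S r. x I * w r I) / (\<Sum>I\<in>S r. w r I)) (1/2) < e) sequentially"
        using x[rule_format, of k]
      proof eventually_elim
        case (elim r)
        then have "\<bar>(\<Sum>I\<in>S r. x I * w r I) / (\<Sum>I\<in>S r. w r I) - 1/2\<bar> < 1 / real (Suc k)"
          by (simp add: field_simps abs_div_pos[symmetric] diff_divide_distrib[symmetric] mult.commute)
        also have "\<dots> < e" using k by (simp add: inverse_eq_divide)
        finally show ?case by (simp add: dist_real_def)
      qed
    qed
  qed
qed

lemma sum_sq_ratio_ge:
  fixes w :: "'a \<Rightarrow> real"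
  assumes S: "finite S" and w: "\<And>I. I \<in> S \<Longrightarrow> 0 \<le> w I" "\<And>I. I \<in> S \<Longrightarrow> w I \<le> c"
    and W0: "(\<Sum>I\<in>S. w I) > 0"
  shows "(\<Sum>I\<in>S. w I) / c \<le> (\<Sum>I\<in>S. w I)\<^sup>2 / (\<Sum>I\<in>S. (w I)\<^sup>2)"
proof -
  obtain I0 where I0: "I0 \<in> S" "w I0 > 0" using W0 w(1) by (metis not_le sum_nonpos)
  then have c0: "c > 0" using w(2) by force
  have V0: "(\<Sum>I\<in>S. (w I)\<^sup>2) > 0" using I0 by (intro sum_pos2[OF S I0(1)]) auto
  have "(\<Sum>I\<in>S. (w I)\<^sup>2) \<le> (\<Sum>I\<in>S. c * w I)"
    using w by (intro sum_mono) (simp add: power2_eq_square mult_right_mono)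
  then have "(\<Sum>I\<in>S. (w I)\<^sup>2) \<le> c * (\<Sum>I\<in>S. w I)" by (simp add: sum_distrib_left)
  then have "(\<Sum>I\<in>S. w I)\<^sup>2 / (c * (\<Sum>I\<in>S. w I)) \<le> (\<Sum>I\<in>S. w I)\<^sup>2 / (\<Sum>I\<in>S. (w I)\<^sup>2)"
    using V0 W0 c0 by (intro divide_left_mono) auto
  then show ?thesis using W0 by (simp add: power2_eq_square)
qed

(* The pure diagram weights of column p_r, row q are spread out: their total mass eventually
   dominates \<kappa> r times the largest single weight, because the column sum grows like
   Kcoef \<cdot> r^(2(n-1)) while each entry is at most Kcoef \<cdot> r^(n-1). *)
lemma pure_diagram_weights_spread:
  fixes n q :: nat and p :: "nat \<Rightarrow> int" and a :: real
  assumes n2: "n \<ge> 2" and q: "q \<in> {1..n}"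
    and prange: "\<forall>r\<ge>n. 0 \<le> p r \<and> p r \<le> int r - int n"
    and "((\<lambda>r. (2 * real_of_int (p r) - real r) / sqrt (real r)) \<longlongrightarrow> a) sequentially"
  shows "\<exists>\<kappa>>0. eventually (\<lambda>r. (\<Sum>I\<in>subsets_r n r. pure_diagram n r I (nat (p r)) q) > 0 \<and>
     \<kappa> * real r \<le> (\<Sum>I\<in>subsets_r n r. pure_diagram n r I (nat (p r)) q)\<^sup>2 /
                 (\<Sum>I\<in>subsets_r n r. (pure_diagram n r I (nat (p r)) q)\<^sup>2)) sequentially"
proof -
  define E where "E r = esym (q-1) (nat (p r) + q - 1) * esym (n-q) (r - (nat (p r) + q))" for r
  define D where "D = (2^(n-1) * fact (q-1) * fact (n-q) :: real)"
  define \<kappa> where "\<kappa> = (1/4)^(n-1) / (2 * D)"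
  have D0: "D > 0" by (simp add: D_def)
  have "eventually (\<lambda>r. (1/4)^(n-1) / 2 < E r * D / real r ^ (2*(n-1))) sequentially"
    using esym_product_limit[OF assms(2-4)] unfolding E_def D_def by (rule order_tendstoD) simp
  moreover have "eventually (\<lambda>r. n + 1 \<le> r) sequentially" by (rule eventually_ge_at_top)
  ultimately have "eventually (\<lambda>r. (\<Sum>I\<in>subsets_r n r. pure_diagram n r I (nat (p r)) q) > 0 \<and>
     \<kappa> * real r \<le> (\<Sum>I\<in>subsets_r n r. pure_diagram n r I (nat (p r)) q)\<^sup>2 /
                 (\<Sum>I\<in>subsets_r n r. (pure_diagram n r I (nat (p r)) q)\<^sup>2)) sequentially"
  proof eventually_elim
    case (elim r)
    define K where "K = Kcoef n r (nat (p r) + q)"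
    have rn: "n \<le> r" "1 \<le> r" and n1: "n \<ge> 1" using elim n2 by auto
    have p_le: "nat (p r) \<le> r - n" using prange rn by auto
    have K0: "K > 0" unfolding K_def by (rule Kcoef_pos)
    have fin: "finite (subsets_r n r)" unfolding subsets_r_def
      by (rule finite_subset[of _ "Pow {1..r}"]) auto
    have W: "(\<Sum>I\<in>subsets_r n r. pure_diagram n r I (nat (p r)) q) = K * E r"
      using sum_pure_diagram[OF n1 rn(1) p_le q] by (simp add: K_def E_def mult.assoc)
    have rpos: "real r ^ (2*(n-1)) > 0" using rn by simp
    have E_lower: "\<kappa> * real r ^ (2*(n-1)) < E r"
      using elim(1) D0 rpos by (simp add: \<kappa>_def field_simps)
    moreover have "\<kappa> * real r ^ (2*(n-1)) > 0" using rpos D0 by (simp add: \<kappa>_def)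
    ultimately have W0: "K * E r > 0" using K0 by simp
    have "\<kappa> * real r \<le> \<kappa> * real r ^ (n-1)"
      using rn n2 D0 by (intro mult_left_mono self_le_power) (auto simp: \<kappa>_def)
    also have "\<dots> = \<kappa> * real r ^ (2*(n-1)) / real r ^ (n-1)"
      using rn by (simp add: mult_2 power_add)
    also have "\<dots> \<le> E r / real r ^ (n-1)"
      using E_lower by (intro divide_right_mono) auto
    also have "\<dots> = K * E r / (K * real r ^ (n-1))" using K0 by simp
    also have "\<dots> \<le> (K * E r)\<^sup>2 / (\<Sum>I\<in>subsets_r n r. (pure_diagram n r I (nat (p r)) q)\<^sup>2)"
      unfolding W[symmetric]
    proof (rule sum_sq_ratio_ge[OF fin])
      fix I assume "I \<in> subsets_r n r"
      then show "0 \<le> pure_diagram n r I (nat (p r)) q" "pure_diagram n r I (nat (p r)) q \<le> K * real r ^ (n-1)"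
        using pure_diagram_nonneg pure_diagram_le n1 rn p_le q by (auto simp: K_def)
    qed (use W W0 in simp)
    finally show ?case using W W0 by simp
  qed
  moreover have "\<kappa> > 0" using D0 by (simp add: \<kappa>_def)
  ultimately show ?thesis by blast
qed

lemma tendsto_rescaled_ratio:
  fixes c W S :: "nat \<Rightarrow> real"
  assumes "((\<lambda>r. c r * W r / 2) \<longlongrightarrow> L) sequentially" "((\<lambda>r. S r / W r) \<longlongrightarrow> 1/2) sequentially"
    and "eventually (\<lambda>r. W r \<noteq> 0) sequentially"
  shows "((\<lambda>r. c r * S r) \<longlongrightarrow> L) sequentially"
proof -
  have "((\<lambda>r. (c r * W r / 2) * (2 * (S r / W r))) \<longlongrightarrow> L * (2 * (1/2))) sequentially"
    by (intro tendsto_intros assms)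
  moreover have "eventually (\<lambda>r. (c r * W r / 2) * (2 * (S r / W r)) = c r * S r) sequentially"
    using assms(3) by eventually_elim simp
  ultimately show ?thesis by (simp add: tendsto_cong)
qed

theorem mainTheorem7:
  fixes n q :: nat and p :: "nat \<Rightarrow> int" and a :: real
  assumes "n \<ge> 2" and "q \<in> {1..n}"
    and "\<forall>r\<ge>n. 0 \<le> p r \<and> p r \<le> int r - int n"
    and "((\<lambda>r. (2 * real_of_int (p r) - real r) / sqrt (real r)) \<longlongrightarrow> a) sequentially"
  shows "AE x in Omega n.
    ((\<lambda>r. (fact (q - 1) * fact (n - q) * sqrt (2 * pi * real r)
             / (2 powr (real r + 2 - 3 * real n) * real r ^ (n - 1)))
           * kx n x r (nat (p r)) q)
      \<longlongrightarrow> exp (- (a\<^sup>2) / 2)) sequentially"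
proof -
  define w where "w r I = pure_diagram n r I (nat (p r)) q" for r I
  obtain \<kappa> where \<kappa>: "\<kappa> > 0" and spread: "eventually (\<lambda>r. (\<Sum>I\<in>subsets_r n r. w r I) > 0 \<and>
      \<kappa> * real r \<le> (\<Sum>I\<in>subsets_r n r. w r I)\<^sup>2 / (\<Sum>I\<in>subsets_r n r. (w r I)\<^sup>2)) sequentially"
    using pure_diagram_weights_spread[OF assms] unfolding w_def by blast
  have subsets: "subsets_r n r \<subseteq> subsets_inf n" "finite (subsets_r n r)" for r
    unfolding subsets_r_def subsets_inf_def by (auto intro: finite_subset)
  have w_nonneg: "w r I \<ge> 0" for r I
    unfolding w_def pure_diagram_def by (simp add: prod_nonneg)
  have nonzero: "eventually (\<lambda>r. (\<Sum>I\<in>subsets_r n r. w r I) \<noteq> 0) sequentially"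
    using spread by eventually_elim simp
  have "AE x in Omega n. ((\<lambda>r. (\<Sum>I\<in>subsets_r n r. x I * w r I) / (\<Sum>I\<in>subsets_r n r. w r I)) \<longlongrightarrow> 1/2) sequentially"
    using weighted_slln[OF subsets w_nonneg \<kappa> spread] .
  then show ?thesis unfolding kx_def w_def[symmetric]
    by (rule eventually_mono) (rule tendsto_rescaled_ratio[OF column_sum_limit[OF assms, folded w_def] _ nonzero])
qed

end
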